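(* Let $P,F,A_I,A_O,B_I,B_O$ be finite-dimensional Hilbert spaces with $A_I\cong A_O$, $B_I\cong B_O$, $P\cong F$ (identified via their computational bases), and let $|w\rangle\in P\otimes A_I\otimes A_O\otimes B_I\otimes B_O\otimes F$ be such that $|w\rangle\langle w|$ is a pure process. Define $$|w_r\rangle:=(\mathrm{SWAP}_{PF}\otimes\mathrm{SWAP}_{A_IA_O}\otimes\mathrm{SWAP}_{B_IB_O})\,|w^*\rangle,$$ where $|w^*\rangle$ is the entrywise complex conjugate of $|w\rangle$ in the computational basis and $\mathrm{SWAP}_{XY}$ exchanges the isomorphic factors $X$ and $Y$. Then $|w_r\rangle\langle w_r|$ is a valid pure process.
   Context: All Hilbert spaces are finite-dimensional with fixed computational bases; juxtaposition denotes tensor product. For a linear map $K:X\to Y$, $|K\rangle\!\rangle^{XY}=\sum_i|i\rangle^X\otimes(K|i\rangle)^Y$. For an operator $W$ on $X\otimes Y$, $W^{T_X}$ is its partial transpose on $X$. The Choi operator of $\mathcal{M}:\mathcal{L}(X)\to\mathcal{L}(Y)$ is $\sum_{ij}|i\rangle\langle j|\otimes\mathcal{M}(|i\rangle\langle j|)$. A process matrix is an operator $W$ on $PFA_IA_OB_IB_O$ such that for all finite-dimensional ancilla spaces $A_I',A_O',B_I',B_O'$ and all CPTP maps $\mathcal{M}_x:\mathcal{L}(A_IA_I')\to\mathcal{L}(A_OA_O')$, $\mathcal{M}_y:\mathcal{L}(B_IB_I')\to\mathcal{L}(B_OB_O')$ with Choi operators $M_x,M_y$, the operator $\mathrm{tr}_{A_IA_OB_IB_O}\big(W^{T_{A_IA_OB_IB_O}}(M_x\otimes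 M_y)\big)$ is the Choi operator of a CPTP map from $PA_I'B_I'$ to $FA_O'B_O'$. It is pure if for all ancilla spaces with $d_{A_I}d_{A_I'}=d_{A_O}d_{A_O'}$, $d_{B_I}d_{B_I'}=d_{B_O}d_{B_O'}$, $d_Pd_{A_I'}d_{B_I'}=d_Fd_{A_O'}d_{B_O'}$ and all unitaries $U:A_IA_I'\to A_OA_O'$, $V:B_IB_I'\to B_OB_O'$, the operator $\mathrm{tr}_{A_IA_OB_IB_O}\big(W^{T_{A_IA_OB_IB_O}}(|U\rangle\!\rangle\langle\!\langle U|\otimes|V\rangle\!\rangle\langle\!\langle V|)\big)$ is the Choi operator of a unitary channel from $PA_I'B_I'$ to $FA_O'B_O'$. *)

theory Defs
  imports Complex_Main
begin

text \<open>A computational basis vector of a composite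
system with label set S is a function from labels to indices which is supported on S
and bounded by the dimension of each label. Operators are matrices indexed by such
basis labels; tensor ordering is irrelevant in this representation.\<close>

datatype party = P | F | AI | AO | BI | BO | AI' | AO' | BI' | BO' | Ref

type_synonym bidx = "party \<Rightarrow> nat"
type_synonym vec = "bidx \<Rightarrow> complex"
type_synonym op = "bidx \<Rightarrow> bidx \<Rightarrow> complex"
type_synonym dims = "party \<Rightarrow> nat"

definition basis :: "dims \<Rightarrow> party set \<Rightarrow> bidx set" where
  "basis d S = {x. \<forall>l. (l \<in> S \<longrightarrow> x l < d l) \<and> (l \<notin> S \<longrightarrow> x l = 0)}"

definition restr :: "party set \<Rightarrow> bidx \<Rightarrow> bidx" where
  "restr S x = (\<lambda>l. if l \<in> S then x l else 0)"

definition join :: "party set \<Rightarrow> bidx \<Rightarrow> bidx \<Rightarrow> bidx" where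
  "join S x y = (\<lambda>l. if l \<in> S then x l else y l)"

definition op_eq :: "dims \<Rightarrow> party set \<Rightarrow> op \<Rightarrow> op \<Rightarrow> bool" where
  "op_eq d S A B \<longleftrightarrow> (\<forall>x\<in>basis d S. \<forall>y\<in>basis d S. A x y = B x y)"

definition id_op :: op where
  "id_op x y = (if x = y then 1 else 0)"

definition op_mult :: "dims \<Rightarrow> party set \<Rightarrow> op \<Rightarrow> op \<Rightarrow> op" where
  "op_mult d S A B = (\<lambda>x y. \<Sum>z\<in>basis d S. A x z * B z y)"

definition trace :: "dims \<Rightarrow> party set \<Rightarrow> op \<Rightarrow> complex" where
  "trace d S A = (\<Sum>x\<in>basis d S. A x x)"

text \<open>partial trace over T of an operator on S \<union> T (S, T disjoint); result lives on S\<close>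
definition ptrace :: "dims \<Rightarrow> party set \<Rightarrow> party set \<Rightarrow> op \<Rightarrow> op" where
  "ptrace d S T A = (\<lambda>x y. \<Sum>z\<in>basis d T. A (join S x z) (join S y z))"

definition ptranspose :: "party set \<Rightarrow> op \<Rightarrow> op" where
  "ptranspose T A = (\<lambda>x y. A (join T y x) (join T x y))"

text \<open>tensor product of A on S and B on T (S, T disjoint)\<close>
definition tensor :: "party set \<Rightarrow> party set \<Rightarrow> op \<Rightarrow> op \<Rightarrow> op" where
  "tensor S T A B = (\<lambda>x y. A (restr S x) (restr S y) * B (restr T x) (restr T y))"

definition embed :: "party set \<Rightarrow> party set \<Rightarrow> op \<Rightarrow> op" where
  "embed S T A = tensor S (T - S) A id_op"

definition psd :: "dims \<Rightarrow> party set \<Rightarrow> op \<Rightarrow> bool" where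
  "psd d S A \<longleftrightarrow> (\<forall>v::vec.
     Im (\<Sum>x\<in>basis d S. \<Sum>y\<in>basis d S. cnj (v x) * A x y * v y) = 0 \<and>
     0 \<le> Re (\<Sum>x\<in>basis d S. \<Sum>y\<in>basis d S. cnj (v x) * A x y * v y))"

text \<open>Maps L(X) \<rightarrow> L(Y) are functions on operators; they must only depend on the
input restricted to X and be linear.\<close>
definition is_linear_map :: "dims \<Rightarrow> party set \<Rightarrow> party set \<Rightarrow> (op \<Rightarrow> op) \<Rightarrow> bool" where
  "is_linear_map d X Y \<Phi> \<longleftrightarrow>
     (\<forall>A B. op_eq d X A B \<longrightarrow> op_eq d Y (\<Phi> A) (\<Phi> B)) \<and>
     (\<forall>(c::complex) A B. op_eq d Y (\<Phi> (\<lambda>x y. c * A x y + B x y)) (\<lambda>x y. c * \<Phi> A x y + \<Phi> B x y))"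

text \<open>id_Ref \<otimes> \<Phi> applied to an operator on X \<union> {Ref}\<close>
definition ampl :: "(op \<Rightarrow> op) \<Rightarrow> op \<Rightarrow> op" where
  "ampl \<Phi> \<rho> = (\<lambda>x y. \<Phi> (\<lambda>a b. \<rho> (join {Ref} x a) (join {Ref} y b)) (restr (- {Ref}) x) (restr (- {Ref}) y))"

definition is_cp :: "dims \<Rightarrow> party set \<Rightarrow> party set \<Rightarrow> (op \<Rightarrow> op) \<Rightarrow> bool" where
  "is_cp d X Y \<Phi> \<longleftrightarrow> (\<forall>k\<ge>1. \<forall>\<rho>. psd (d(Ref := k)) (insert Ref X) \<rho> \<longrightarrow>
                                     psd (d(Ref := k)) (insert Ref Y) (ampl \<Phi> \<rho>))"

definition is_tp :: "dims \<Rightarrow> party set \<Rightarrow> party set \<Rightarrow> (op \<Rightarrow> op) \<Rightarrow> bool" where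
  "is_tp d X Y \<Phi> \<longleftrightarrow> (\<forall>\<rho>. trace d Y (\<Phi> \<rho>) = trace d X \<rho>)"

definition is_cptp :: "dims \<Rightarrow> party set \<Rightarrow> party set \<Rightarrow> (op \<Rightarrow> op) \<Rightarrow> bool" where
  "is_cptp d X Y \<Phi> \<longleftrightarrow> is_linear_map d X Y \<Phi> \<and> is_cp d X Y \<Phi> \<and> is_tp d X Y \<Phi>"

definition unit_op :: "bidx \<Rightarrow> bidx \<Rightarrow> op" where
  "unit_op a b = (\<lambda>u v. if u = a \<and> v = b then 1 else 0)"

text \<open>Choi operator \<Sum>ij |i><j| \<otimes> \<Phi>(|i><j|), an operator on X \<union> Y\<close>
definition choi :: "party set \<Rightarrow> party set \<Rightarrow> (op \<Rightarrow> op) \<Rightarrow> op" where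
  "choi X Y \<Phi> = (\<lambda>x y. \<Phi> (unit_op (restr X x) (restr X y)) (restr Y x) (restr Y y))"

definition is_cptp_choi :: "dims \<Rightarrow> party set \<Rightarrow> party set \<Rightarrow> op \<Rightarrow> bool" where
  "is_cptp_choi d X Y J \<longleftrightarrow> (\<exists>\<Phi>. is_cptp d X Y \<Phi> \<and> op_eq d (X \<union> Y) (choi X Y \<Phi>) J)"

text \<open>A linear map U : X \<rightarrow> Y is the matrix with entries U y x (y in Y, x in X).\<close>
definition is_unitary :: "dims \<Rightarrow> party set \<Rightarrow> party set \<Rightarrow> op \<Rightarrow> bool" where
  "is_unitary d X Y U \<longleftrightarrow>
     (\<forall>x\<in>basis d X. \<forall>x'\<in>basis d X. (\<Sum>y\<in>basis d Y. cnj (U y x) * U y x') = id_op x x') \<and>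
     (\<forall>y\<in>basis d Y. \<forall>y'\<in>basis d Y. (\<Sum>x\<in>basis d X. U y x * cnj (U y' x)) = id_op y y')"

definition uchan :: "dims \<Rightarrow> party set \<Rightarrow> op \<Rightarrow> op \<Rightarrow> op" where
  "uchan d X U \<rho> = (\<lambda>y y'. \<Sum>x\<in>basis d X. \<Sum>x'\<in>basis d X. U y x * \<rho> x x' * cnj (U y' x'))"

definition is_unitary_choi :: "dims \<Rightarrow> party set \<Rightarrow> party set \<Rightarrow> op \<Rightarrow> bool" where
  "is_unitary_choi d X Y J \<longleftrightarrow>
     (\<exists>U. is_unitary d X Y U \<and> op_eq d (X \<union> Y) (choi X Y (uchan d X U)) J)"

text \<open>|U>> = \<Sum>i |i> \<otimes> U|i>, a vector on X \<union> Y\<close>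
definition dket :: "party set \<Rightarrow> party set \<Rightarrow> op \<Rightarrow> vec" where
  "dket X Y U = (\<lambda>z. U (restr Y z) (restr X z))"

definition proj :: "vec \<Rightarrow> op" where
  "proj v = (\<lambda>x y. v x * cnj (v y))"

definition mainS :: "party set" where "mainS = {P, F, AI, AO, BI, BO}"
definition allS :: "party set" where "allS = {P, F, AI, AO, BI, BO, AI', AO', BI', BO'}"

definition anc_dims :: "dims \<Rightarrow> nat \<Rightarrow> nat \<Rightarrow> nat \<Rightarrow> nat \<Rightarrow> dims" where
  "anc_dims d a1 a2 b1 b2 = d(AI' := a1, AO' := a2, BI' := b1, BO' := b2)"

text \<open>tr_{AI AO BI BO}( W^{T_{AI AO BI BO}} (Mx \<otimes> My) ), an operator on P F AI' AO' BI' BO'\<close>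
definition link_out :: "dims \<Rightarrow> op \<Rightarrow> op \<Rightarrow> op \<Rightarrow> op" where
  "link_out d W Mx My =
     ptrace d {P, F, AI', AO', BI', BO'} {AI, AO, BI, BO}
       (op_mult d allS
          (embed mainS allS (ptranspose {AI, AO, BI, BO} W))
          (embed {AI, AI', AO, AO', BI, BI', BO, BO'} allS
             (tensor {AI, AI', AO, AO'} {BI, BI', BO, BO'} Mx My)))"

definition is_process_matrix :: "dims \<Rightarrow> op \<Rightarrow> bool" where
  "is_process_matrix d W \<longleftrightarrow>
     (\<forall>a1 a2 b1 b2. 1 \<le> a1 \<and> 1 \<le> a2 \<and> 1 \<le> b1 \<and> 1 \<le> b2 \<longrightarrow>
       (\<forall>\<Phi>x \<Phi>y.
          is_cptp (anc_dims d a1 a2 b1 b2) {AI, AI'} {AO, AO'} \<Phi>x \<and>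
          is_cptp (anc_dims d a1 a2 b1 b2) {BI, BI'} {BO, BO'} \<Phi>y \<longrightarrow>
          is_cptp_choi (anc_dims d a1 a2 b1 b2) {P, AI', BI'} {F, AO', BO'}
            (link_out (anc_dims d a1 a2 b1 b2) W
               (choi {AI, AI'} {AO, AO'} \<Phi>x) (choi {BI, BI'} {BO, BO'} \<Phi>y))))"

definition is_pure :: "dims \<Rightarrow> op \<Rightarrow> bool" where
  "is_pure d W \<longleftrightarrow>
     (\<forall>a1 a2 b1 b2. 1 \<le> a1 \<and> 1 \<le> a2 \<and> 1 \<le> b1 \<and> 1 \<le> b2 \<and>
        d AI * a1 = d AO * a2 \<and> d BI * b1 = d BO * b2 \<and> d P * a1 * b1 = d F * a2 * b2 \<longrightarrow>
       (\<forall>U V.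
          is_unitary (anc_dims d a1 a2 b1 b2) {AI, AI'} {AO, AO'} U \<and>
          is_unitary (anc_dims d a1 a2 b1 b2) {BI, BI'} {BO, BO'} V \<longrightarrow>
          is_unitary_choi (anc_dims d a1 a2 b1 b2) {P, AI', BI'} {F, AO', BO'}
            (link_out (anc_dims d a1 a2 b1 b2) W
               (proj (dket {AI, AI'} {AO, AO'} U)) (proj (dket {BI, BI'} {BO, BO'} V)))))"

definition is_pure_process :: "dims \<Rightarrow> op \<Rightarrow> bool" where
  "is_pure_process d W \<longleftrightarrow> is_process_matrix d W \<and> is_pure d W"

definition swap_idx :: "bidx \<Rightarrow> bidx" where
  "swap_idx x = x(P := x F, F := x P, AI := x AO, AO := x AI, BI := x BO, BO := x BI)"

definition w_rev :: "vec \<Rightarrow> vec" where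
  "w_rev w = (\<lambda>x. cnj (w (swap_idx x)))"

end

theory Submission
  imports Defs "HOL-Library.FuncSet" "HOL-Library.Complex_Order"
begin

text \<open>
  Linking the rank-one process \<open>|w\<rangle>\<langle>w|\<close> with rank-one local operations produces the
  rank-one operator of a single vector, the contraction of \<open>w\<close> with the double kets of the local
  unitaries. Complex conjugation of \<open>w\<close> together with the exchange of inputs and outputs turns
  this vector for \<open>w_r\<close> into the conjugated, mirrored vector for \<open>w\<close> and the mirrored adjoints
  of the local unitaries, which are again unitary. Purity of \<open>w\<close> makes the latter the double ket
  of a unitary up to a global phase, and mirroring that unitary shows that \<open>w_r\<close> is pure.

  Validity of \<open>w_r\<close> follows from its purity alone. Decompose the local CPTP maps into Kraus operators and dilate each Kraus family to a
  unitary on a larger ancilla. Purity makes the link of the two dilations a unitary, and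
  restricting the orthonormality of its columns to the embedded copies of the ancillas shows that
  the link of the Kraus operators is trace preserving; as a sum of rank-one operators it is
  completely positive.
\<close>

lemma finite_party_set [simp]: "finite (S :: party set)"
proof -
  have "(UNIV :: party set) = {P, F, AI, AO, BI, BO, AI', AO', BI', BO', Ref}"
    by (auto intro: party.exhaust)
  then show ?thesis
    by (metis finite.emptyI finite.insertI finite_subset subset_UNIV)
qed

lemma finite_basis [simp]: "finite (basis d S)"
proof (rule finite_subset)
  show "basis d S \<subseteq> PiE UNIV (\<lambda>l. {..d l})"
  proof
    fix x assume "x \<in> basis d S"
    then have "x l \<le> d l" for l by (cases "l \<in> S") (auto simp: basis_def)
    then show "x \<in> PiE UNIV (\<lambda>l. {..d l})" by (auto simp: PiE_def extensional_def)
  qed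
qed (auto intro: finite_PiE)

lemma join_in_basis:
  "x \<in> basis d S \<Longrightarrow> y \<in> basis d T \<Longrightarrow> S \<inter> T = {} \<Longrightarrow> join S x y \<in> basis d (S \<union> T)"
  by (auto simp: basis_def join_def)

lemma restr_in_basis: "x \<in> basis d T \<Longrightarrow> S \<subseteq> T \<Longrightarrow> restr S x \<in> basis d S"
  by (auto simp: basis_def restr_def)

lemma basis_cong: "(\<And>l. l \<in> S \<Longrightarrow> d1 l = d2 l) \<Longrightarrow> basis d1 S = basis d2 S"
  by (auto simp: basis_def)

lemma basis_upd_notin: "l \<notin> S \<Longrightarrow> basis (d(l := k)) S = basis d S"
  by (rule basis_cong) auto

lemma restr_join_left: "x \<in> basis d S \<Longrightarrow> restr S (join S x y) = x"
  by (auto simp: basis_def restr_def join_def fun_eq_iff)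

lemma restr_join_right: "y \<in> basis d T \<Longrightarrow> S \<inter> T = {} \<Longrightarrow> restr T (join S x y) = y"
  by (auto simp: basis_def restr_def join_def fun_eq_iff)

lemma party_fun_eq_iff: "f = g \<longleftrightarrow> (f P = g P \<and> f F = g F \<and> f AI = g AI \<and> f AO = g AO \<and> f BI = g BI \<and>
   f BO = g BO \<and> f AI' = g AI' \<and> f AO' = g AO' \<and> f BI' = g BI' \<and> f BO' = g BO' \<and> f Ref = g Ref)"
  by (auto simp: fun_eq_iff) (case_tac x; simp)

lemma sum_basis_union:
  assumes "S \<inter> T = {}"
  shows "(\<Sum>u\<in>basis d (S \<union> T). f u) = (\<Sum>x\<in>basis d S. \<Sum>y\<in>basis d T. f (join S x y))"
proof -
  have "bij_betw (\<lambda>(x, y). join S x y) (basis d S \<times> basis d T) (basis d (S \<union> T))"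
    by (rule bij_betwI[where g = "\<lambda>u. (restr S u, restr T u)"])
       (use assms in \<open>auto simp: basis_def restr_def join_def fun_eq_iff\<close>)
  then show ?thesis
    by (simp add: sum.reindex_bij_betw[symmetric] sum.cartesian_product case_prod_beta)
qed

lemma sum_basis_fun_upd:
  assumes "L \<in> S"
  shows "(\<Sum>q\<in>basis d S. f q) = (\<Sum>q\<in>basis d (S - {L}). \<Sum>j<d L. f (q(L := j)))"
proof -
  have "bij_betw (\<lambda>(q, j). q(L := j)) (basis d (S - {L}) \<times> {..<d L}) (basis d S)"
    by (rule bij_betwI[where g = "\<lambda>u. (u(L := 0), u L)"])
       (use assms in \<open>auto simp: basis_def fun_eq_iff\<close>)
  then show ?thesis
    by (simp add: sum.reindex_bij_betw[symmetric] sum.cartesian_product case_prod_beta)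
qed

lemma sum_basis_pair:
  "l \<noteq> l' \<Longrightarrow> (\<Sum>q\<in>basis d {l, l'}. f q) = (\<Sum>q\<in>basis d {l}. \<Sum>j<d l'. f (q(l' := j)))"
  using sum_basis_fun_upd[where L = l' and S = "{l, l'}"] by (simp add: insert_Diff_if)

lemma sum_indicator_mult:
  assumes "finite A"
  shows "(\<Sum>b\<in>A. (if b = a then 1 else 0) * f b) = (if a \<in> A then f a else (0::'a::semiring_1))"
    and "(\<Sum>b\<in>A. (if a = b then 1 else 0) * f b) = (if a \<in> A then f a else 0)"
    and "(\<Sum>b\<in>A. f b * (if b = a then 1 else 0)) = (if a \<in> A then f a else 0)"
proof -
  have "(\<Sum>b\<in>A. (if b = a then 1 else 0) * f b) = (\<Sum>b\<in>A. if b = a then f b else 0)"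
    "(\<Sum>b\<in>A. (if a = b then 1 else 0) * f b) = (\<Sum>b\<in>A. if b = a then f b else 0)"
    "(\<Sum>b\<in>A. f b * (if b = a then 1 else 0)) = (\<Sum>b\<in>A. if b = a then f b else 0)"
    by (auto intro: sum.cong)
  then show "(\<Sum>b\<in>A. (if b = a then 1 else 0) * f b) = (if a \<in> A then f a else 0)"
    and "(\<Sum>b\<in>A. (if a = b then 1 else 0) * f b) = (if a \<in> A then f a else 0)"
    and "(\<Sum>b\<in>A. f b * (if b = a then 1 else 0)) = (if a \<in> A then f a else 0)"
    using assms by simp_all
qed

lemma sum_swap_inner_outer:
  "(\<Sum>a\<in>A. \<Sum>b\<in>B. \<Sum>c\<in>C. \<Sum>e\<in>E. f a b c e) = (\<Sum>c\<in>C. \<Sum>e\<in>E. \<Sum>a\<in>A. \<Sum>b\<in>B. f a b c e)"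
proof -
  have "(\<Sum>a\<in>A. \<Sum>b\<in>B. \<Sum>c\<in>C. \<Sum>e\<in>E. f a b c e) = (\<Sum>a\<in>A. \<Sum>c\<in>C. \<Sum>e\<in>E. \<Sum>b\<in>B. f a b c e)"
    by (intro sum.cong refl) (simp add: sum.swap[of _ B] sum.swap[of _ B C])
  also have "\<dots> = (\<Sum>c\<in>C. \<Sum>e\<in>E. \<Sum>a\<in>A. \<Sum>b\<in>B. f a b c e)"
    by (simp add: sum.swap[of _ A] sum.swap[of _ A C])
  finally show ?thesis .
qed

lemma sum_lessThan_mult:
  "(\<Sum>j<(a::nat) * r. g j) = (\<Sum>k<r. \<Sum>q<a. g (q + a * k) :: 'a::comm_monoid_add)"
proof (induction r)
  case (Suc r)
  have "{..<a * Suc r} = {..<a * r} \<union> {a * r..<a * r + a}" by auto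
  moreover have "(\<Sum>j\<in>{a * r..<a * r + a}. g j) = (\<Sum>q<a. g (q + a * r))"
    by (rule sum.reindex_bij_witness[of _ "\<lambda>q. q + a * r" "\<lambda>j. j - a * r"]) auto
  ultimately show ?case using Suc by (simp add: sum.union_disjoint ivl_disj_int)
qed simp

lemma sum_lessThan_if_less:
  "b \<le> (c::nat) \<Longrightarrow> (\<Sum>j<c. if j < b then g j else 0) = (\<Sum>j<b. g j :: 'a::comm_monoid_add)"
proof -
  assume "b \<le> c"
  then have "{j \<in> {..<c}. j < b} = {..<b}" by auto
  then show ?thesis by (simp add: sum.inter_filter[symmetric])
qed

lemma sum_lessThan_if_conj:
  assumes "b \<le> (c::nat)" "b' \<le> (c'::nat)"
  shows "(\<Sum>j<c. \<Sum>j'<c'. if j < b \<and> j' < b' then h j j' else 0) = (\<Sum>j<b. \<Sum>j'<b'. h j j' :: 'a::comm_monoid_add)"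
proof -
  have "(\<Sum>j'<c'. if j < b \<and> j' < b' then h j j' else 0) = (if j < b then \<Sum>j'<b'. h j j' else 0)" for j
    using assms(2) by (cases "j < b") (simp_all add: sum_lessThan_if_less)
  then show ?thesis using assms(1) by (simp add: sum_lessThan_if_less)
qed

section \<open>Positive semidefinite kernels\<close>

definition qform :: "'a set \<Rightarrow> ('a \<Rightarrow> 'a \<Rightarrow> complex) \<Rightarrow> ('a \<Rightarrow> complex) \<Rightarrow> complex" where
  "qform B A v = (\<Sum>x\<in>B. \<Sum>y\<in>B. cnj (v x) * A x y * v y)"

definition psd_on :: "'a set \<Rightarrow> ('a \<Rightarrow> 'a \<Rightarrow> complex) \<Rightarrow> bool" where
  "psd_on B A \<longleftrightarrow> (\<forall>v. 0 \<le> qform B A v)"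

lemma psd_iff_psd_on: "psd d S A \<longleftrightarrow> psd_on (basis d S) A"
  by (auto simp: psd_def psd_on_def qform_def less_eq_complex_def)

lemma qform_reindex:
  assumes "bij_betw g B1 B2"
  shows "qform B1 (\<lambda>a b. A (g a) (g b)) (\<lambda>a. v (g a)) = qform B2 A v"
proof -
  have "qform B1 (\<lambda>a b. A (g a) (g b)) (\<lambda>a. v (g a)) = (\<Sum>x\<in>B1. \<Sum>y\<in>B2. cnj (v (g x)) * A (g x) y * v y)"
    unfolding qform_def by (intro sum.cong refl) (rule sum.reindex_bij_betw[OF assms])
  also have "\<dots> = qform B2 A v"
    unfolding qform_def by (rule sum.reindex_bij_betw[OF assms, where g = "\<lambda>x. \<Sum>y\<in>B2. cnj (v x) * A x y * v y"])
  finally show ?thesis .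
qed

lemma qform_support:
  assumes "finite B" "S \<subseteq> B" "\<And>z. z \<in> B - S \<Longrightarrow> v z = 0"
  shows "qform B A v = qform S A v"
proof -
  have "qform B A v = (\<Sum>x\<in>B. \<Sum>y\<in>S. cnj (v x) * A x y * v y)"
    unfolding qform_def using assms by (intro sum.cong refl sum.mono_neutral_right) auto
  also have "\<dots> = qform S A v"
    unfolding qform_def using assms by (intro sum.mono_neutral_right) (auto intro: finite_subset)
  finally show ?thesis .
qed

lemma psd_on_cong: "(\<And>a b. a \<in> B \<Longrightarrow> b \<in> B \<Longrightarrow> A a b = A' a b) \<Longrightarrow> psd_on B A = psd_on B A'"
  by (simp add: psd_on_def qform_def)

lemma psd_on_subset:
  assumes "psd_on B A" "finite B" "S \<subseteq> B"
  shows "psd_on S A"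
  unfolding psd_on_def
proof
  fix v :: "'a \<Rightarrow> complex"
  define u where "u z = (if z \<in> S then v z else 0)" for z
  have "qform B A u = qform S A u" using assms by (intro qform_support) (auto simp: u_def)
  also have "\<dots> = qform S A v" unfolding qform_def u_def by (intro sum.cong refl) auto
  finally show "0 \<le> qform S A v" using assms(1) unfolding psd_on_def by metis
qed

lemma psd_on_sum:
  assumes "finite K" "\<And>k. k \<in> K \<Longrightarrow> psd_on B (A k)"
  shows "psd_on B (\<lambda>x y. \<Sum>k\<in>K. A k x y)"
proof -
  have "qform B (\<lambda>x y. \<Sum>k\<in>K. A k x y) v = (\<Sum>k\<in>K. qform B (A k) v)" for v
    unfolding qform_def by (simp add: sum_distrib_left sum_distrib_right sum.swap[of _ K])
  then show ?thesis using assms unfolding psd_on_def by (simp add: sum_nonneg)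
qed

lemma psd_on_proj: "psd_on B (proj f)"
  unfolding psd_on_def
proof
  fix v
  define S where "S = (\<Sum>y\<in>B. cnj (f y) * v y)"
  have "qform B (proj f) v = cnj S * S"
    unfolding qform_def proj_def S_def cnj_sum sum_product by (intro sum.cong refl) (simp add: ac_simps)
  also have "\<dots> = of_real ((cmod S)\<^sup>2)"
    by (metis complex_norm_square mult.commute)
  finally show "0 \<le> qform B (proj f) v" by (simp add: less_eq_complex_def)
qed

lemma psd_on_congruence:
  assumes "psd_on B1 \<rho>"
  shows "psd_on B2 (\<lambda>a b. \<Sum>x\<in>B1. \<Sum>y\<in>B1. K a x * \<rho> x y * cnj (K b y))"
proof -
  have "qform B2 (\<lambda>a b. \<Sum>x\<in>B1. \<Sum>y\<in>B1. K a x * \<rho> x y * cnj (K b y)) u =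
      qform B1 \<rho> (\<lambda>x. \<Sum>b\<in>B2. cnj (K b x) * u b)" for u
    unfolding qform_def cnj_sum
    by (simp add: sum_distrib_left sum_distrib_right sum_swap_inner_outer[of _ B2 B2] ac_simps)
  then show ?thesis using assms unfolding psd_on_def by simp
qed

lemma qform_two_points:
  assumes "finite B" "x \<in> B" "y \<in> B" "x \<noteq> y"
  shows "qform B A (\<lambda>z. if z = x then a else if z = y then b else 0) =
    cnj a * a * A x x + cnj a * b * A x y + cnj b * a * A y x + cnj b * b * A y y"
proof -
  have "qform B A (\<lambda>z. if z = x then a else if z = y then b else 0) =
      qform {x, y} A (\<lambda>z. if z = x then a else if z = y then b else 0)"
    using assms by (intro qform_support) auto
  then show ?thesis using assms by (simp add: qform_def algebra_simps)
qed

lemma psd_on_diag: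
  assumes "psd_on B A" "finite B" "x \<in> B"
  shows "0 \<le> A x x"
proof -
  have "qform B A (\<lambda>z. if z = x then 1 else 0) = qform {x} A (\<lambda>z. if z = x then 1 else 0)"
    using assms by (intro qform_support) auto
  also have "\<dots> = A x x" by (simp add: qform_def)
  finally show ?thesis using assms(1) unfolding psd_on_def by metis
qed

lemma psd_on_hermitian:
  assumes psd: "psd_on B A" and B: "finite B" "x \<in> B" "y \<in> B"
  shows "A y x = cnj (A x y)"
proof (cases "x = y")
  case True
  then show ?thesis using psd_on_diag[OF psd B(1,2)] by (simp add: less_eq_complex_def complex_eq_iff)
next
  case False
  have "0 \<le> qform B A (\<lambda>z. if z = x then 1 else if z = y then b else 0)" for b
    using psd unfolding psd_on_def by blast
  then have "Im (A x x + b * A x y + cnj b * A y x + cnj b * b * A y y) = 0" for b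
    using qform_two_points[OF B False] by (simp add: less_eq_complex_def)
  from this[of 1] this[of \<i>] show ?thesis
    using psd_on_diag[OF psd B(1,2)] psd_on_diag[OF psd B(1,3)]
    by (simp add: less_eq_complex_def complex_eq_iff)
qed

lemma psd_on_zero_diag:
  assumes psd: "psd_on B A" and B: "finite B" "s \<in> B" "y \<in> B" and zero: "A s s = 0"
  shows "A s y = 0"
proof (rule ccontr)
  assume nz: "A s y \<noteq> 0"
  then have sy: "s \<noteq> y" using zero by auto
  define c where "c = (Re (A y y) + 1) / (2 * (cmod (A s y))\<^sup>2)"
  define t where "t = - of_real c * A s y"
  have "0 \<le> qform B A (\<lambda>z. if z = s then t else if z = y then 1 else 0)"
    using psd unfolding psd_on_def by blast
  then have "0 \<le> Re (cnj t * A s y + t * A y s + A y y)"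
    using qform_two_points[OF B sy] zero by (simp add: less_eq_complex_def)
  also have "Re (cnj t * A s y + t * A y s + A y y) = Re (A y y) - 2 * c * (cmod (A s y))\<^sup>2"
  proof -
    have "cmod (A s y) * cmod (A s y) = Re (A s y) * Re (A s y) + Im (A s y) * Im (A s y)"
      by (metis cmod_power2 power2_eq_square)
    then show ?thesis
      using psd_on_hermitian[OF psd B] unfolding t_def by (simp add: power2_eq_square algebra_simps)
  qed
  also have "\<dots> = -1" unfolding c_def using nz by (simp add: field_simps)
  finally show False by simp
qed

lemma qform_shift:
  assumes "finite B" "s \<in> B"
  shows "qform B A (\<lambda>x. v x - (if x = s then t else 0)) =
    qform B A v - t * (\<Sum>x\<in>B. cnj (v x) * A x s) - cnj t * (\<Sum>y\<in>B. A s y * v y) + cnj t * t * A s s"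
proof -
  have if_sum: "(\<Sum>y\<in>C. if Q then f y else 0) = (if Q then (\<Sum>y\<in>C. f y) else 0)"
    for Q C and f :: "'a \<Rightarrow> complex" by simp
  have "qform B A (\<lambda>x. v x - (if x = s then t else 0)) =
    (\<Sum>x\<in>B. \<Sum>y\<in>B. cnj (v x) * A x y * v y - (if y = s then cnj (v x) * A x y * t else 0)
       - (if x = s then cnj t * A x y * v y else 0) + (if x = s then (if y = s then cnj t * A x y * t else 0) else 0))"
    unfolding qform_def by (intro sum.cong refl) (auto simp: algebra_simps)
  also have "\<dots> = qform B A v - t * (\<Sum>x\<in>B. cnj (v x) * A x s) - cnj t * (\<Sum>y\<in>B. A s y * v y) + cnj t * t * A s s"
    using assms unfolding qform_def sum.distrib sum_subtractf if_sum
    by (simp add: sum_distrib_left sum_distrib_right mult.assoc mult.left_commute)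
       (intro sum.cong refl, simp add: ac_simps)
  finally show ?thesis .
qed

text \<open>One step of Gaussian elimination: removing the rank-one part
  \<open>A x s A s y / A s s\<close> keeps the matrix positive, since its quadratic form is the
  quadratic form of \<open>A\<close> at a suitably shifted vector. If \<open>A s s = 0\<close> nothing is removed.\<close>
lemma psd_on_deflate:
  assumes psd: "psd_on B A" and B: "finite B" "s \<in> B"
  shows "psd_on B (\<lambda>x y. A x y - A x s * A s y / A s s)"
  unfolding psd_on_def
proof
  fix v
  define S where "S = (\<Sum>y\<in>B. A s y * v y)"
  define t where "t = S / A s s"
  have herm: "A x s = cnj (A s x)" if "x \<in> B" for x using psd_on_hermitian[OF psd B(1,2) that] .
  have real: "cnj (A s s) = A s s" using herm[OF B(2)] by simp
  have colS: "(\<Sum>x\<in>B. cnj (v x) * A x s) = cnj S"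
    unfolding S_def cnj_sum using herm by (intro sum.cong refl) (simp add: mult.commute)
  have "qform B (\<lambda>x y. A x y - A x s * A s y / A s s) v =
      qform B A v - (\<Sum>x\<in>B. cnj (v x) * A x s) * (\<Sum>y\<in>B. A s y * v y) / A s s"
    unfolding qform_def sum_product sum_divide_distrib[symmetric]
    by (simp add: sum_subtractf algebra_simps sum_divide_distrib)
  also have "\<dots> = qform B A (\<lambda>x. v x - (if x = s then t else 0))"
    unfolding qform_shift[OF B] colS S_def[symmetric] t_def
    using real by (cases "A s s = 0") (simp_all add: field_simps)
  finally show "0 \<le> qform B (\<lambda>x y. A x y - A x s * A s y / A s s) v"
    using psd unfolding psd_on_def by simp
qed

lemma psd_on_gram:
  assumes "finite B" "psd_on B A"
  shows "\<exists>(n::nat) m. \<forall>a\<in>B. \<forall>b\<in>B. A a b = (\<Sum>k<n. m k a * cnj (m k b))"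
  using assms
proof (induction B arbitrary: A rule: finite_induct)
  case (insert s B)
  define B' where "B' = insert s B"
  define A' where "A' x y = A x y - A x s * A s y / A s s" for x y
  have fin: "finite B'" and s: "s \<in> B'" using insert.hyps by (auto simp: B'_def)
  have psd: "psd_on B' A" using insert.prems by (simp add: B'_def)
  have psd': "psd_on B' A'" unfolding A'_def by (rule psd_on_deflate[OF psd fin s])
  have "A' s s = 0" by (simp add: A'_def)
  then have row: "A' s y = 0" and col: "A' y s = 0" if "y \<in> B'" for y
    using psd_on_zero_diag[OF psd' fin s that] psd_on_hermitian[OF psd' fin s that] by simp_all
  have "psd_on B A'" using psd_on_subset[OF psd' fin] by (auto simp: B'_def)
  then obtain n :: nat and m where m: "\<forall>a\<in>B. \<forall>b\<in>B. A' a b = (\<Sum>k<n. m k a * cnj (m k b))"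
    using insert.IH by blast
  define \<alpha> where "\<alpha> = Re (A s s)"
  have \<alpha>: "A s s = of_real \<alpha>" "0 \<le> \<alpha>"
    using psd_on_diag[OF psd fin s] by (auto simp: \<alpha>_def less_eq_complex_def complex_eq_iff)
  define m' where "m' k x = (if k < n then (if x = s then 0 else m k x) else A x s / of_real (sqrt \<alpha>))" for k x
  have "A a b = (\<Sum>k<Suc n. m' k a * cnj (m' k b))" if a: "a \<in> B'" and b: "b \<in> B'" for a b
  proof -
    have "(\<Sum>k<n. m' k a * cnj (m' k b)) = A' a b"
      using m a b row col by (cases "a = s \<or> b = s") (auto simp: m'_def B'_def)
    moreover have "m' n a * cnj (m' n b) = A a s * A s b / A s s"
      using psd_on_hermitian[OF psd fin b s] \<alpha>
    by (simp add: m'_def power2_eq_square[symmetric] flip: of_real_power)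
    ultimately show ?thesis by (simp add: A'_def)
  qed
  then show ?case unfolding B'_def by blast
qed simp

section \<open>Kraus representations and Choi operators\<close>

lemma sum_basis_lift_Ref:
  assumes "Ref \<notin> X" "j < k"
  shows "(\<Sum>x\<in>basis d X. G x) =
    (\<Sum>c\<in>basis (d(Ref := k)) (insert Ref X). if c Ref = j then G (restr X c) else 0)"
proof -
  have "(\<Sum>c\<in>basis (d(Ref := k)) (insert Ref X). if c Ref = j then G (restr X c) else 0)
     = (\<Sum>c\<in>basis d X. \<Sum>i<k. if i = j then G (restr X (c(Ref := i))) else 0)"
    using assms(1) by (simp add: sum_basis_fun_upd[where L = Ref] basis_upd_notin)
  also have "\<dots> = (\<Sum>c\<in>basis d X. G c)"
  proof (rule sum.cong[OF refl])
    fix c assume "c \<in> basis d X"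
    then have "restr X (c(Ref := j)) = c" using assms(1) by (auto simp: restr_def basis_def fun_eq_iff)
    then show "(\<Sum>i<k. if i = j then G (restr X (c(Ref := i))) else 0) = G c"
      using assms(2) by simp
  qed
  finally show ?thesis by simp
qed

text \<open>On the reference-extended spaces, \<open>id \<otimes> uchan d X K\<close> is again a conjugation,
  by the operator \<open>id \<otimes> K\<close>.\<close>
lemma ampl_uchan:
  fixes K :: op
  assumes R: "Ref \<notin> X" "Ref \<notin> Y"
    and a: "a \<in> basis (d(Ref := k)) (insert Ref Y)" and b: "b \<in> basis (d(Ref := k)) (insert Ref Y)"
  defines "K' \<equiv> \<lambda>a c. if c Ref = a Ref then K (restr (- {Ref}) a) (restr X c) else 0"
  shows "ampl (uchan d X K) \<rho> a b = (\<Sum>c\<in>basis (d(Ref := k)) (insert Ref X).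
     \<Sum>c'\<in>basis (d(Ref := k)) (insert Ref X). K' a c * \<rho> c c' * cnj (K' b c'))"
proof -
  define BX where "BX = basis (d(Ref := k)) (insert Ref X)"
  have Ref_lt: "a Ref < k" "b Ref < k" using a b by (auto simp: basis_def)
  have join_restr: "join {Ref} e (restr X c) = c" if "c \<in> BX" "c Ref = e Ref" for c e
    using that by (auto simp: BX_def basis_def join_def restr_def fun_eq_iff)
  have restr_join: "restr X (join {Ref} e x) = x" if "x \<in> basis d X" for e x
    using that R by (auto simp: basis_def join_def restr_def fun_eq_iff)
  have "ampl (uchan d X K) \<rho> a b = (\<Sum>x\<in>basis d X. \<Sum>y\<in>basis d X.
      K (restr (- {Ref}) a) x * \<rho> (join {Ref} a x) (join {Ref} b y) * cnj (K (restr (- {Ref}) b) y))"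
    unfolding ampl_def uchan_def ..
  also have "\<dots> = (\<Sum>x\<in>basis d X. \<Sum>c'\<in>BX. if c' Ref = b Ref then K (restr (- {Ref}) a) x *
      \<rho> (join {Ref} a x) (join {Ref} b (restr X c')) * cnj (K (restr (- {Ref}) b) (restr X c')) else 0)"
    by (rule sum.cong[OF refl]) (subst sum_basis_lift_Ref[OF R(1) Ref_lt(2)], simp add: BX_def)
  also have "\<dots> = (\<Sum>c\<in>BX. if c Ref = a Ref then \<Sum>c'\<in>BX. if c' Ref = b Ref then
      K (restr (- {Ref}) a) (restr X c) * \<rho> (join {Ref} a (restr X c)) (join {Ref} b (restr X c')) *
      cnj (K (restr (- {Ref}) b) (restr X c')) else 0 else 0)"
    by (subst sum_basis_lift_Ref[OF R(1) Ref_lt(1)]) (simp add: BX_def)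
  also have "\<dots> = (\<Sum>c\<in>BX. \<Sum>c'\<in>BX. K' a c * \<rho> c c' * cnj (K' b c'))"
    by (intro sum.cong refl) (auto simp: K'_def join_restr intro!: sum.cong)
  finally show ?thesis unfolding BX_def .
qed

lemma uchan_cp:
  assumes "Ref \<notin> X" "Ref \<notin> Y"
  shows "is_cp d X Y (uchan d X K)"
  unfolding is_cp_def psd_iff_psd_on
proof (intro allI impI)
  fix k \<rho> assume "psd_on (basis (d(Ref := k)) (insert Ref X)) \<rho>"
  then show "psd_on (basis (d(Ref := k)) (insert Ref Y)) (ampl (uchan d X K) \<rho>)"
    by (subst psd_on_cong[OF ampl_uchan[OF assms, where k = k]]) (assumption, assumption, erule psd_on_congruence)
qed

lemma is_cp_sum:
  assumes "finite K" "\<And>k. k \<in> K \<Longrightarrow> is_cp d X Y (\<Phi> k)"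
  shows "is_cp d X Y (\<lambda>\<sigma> s t. \<Sum>k\<in>K. \<Phi> k \<sigma> s t)"
  using assms unfolding is_cp_def psd_iff_psd_on ampl_def by (auto intro!: psd_on_sum)

definition kraus_map :: "dims \<Rightarrow> party set \<Rightarrow> 'k set \<Rightarrow> ('k \<Rightarrow> vec) \<Rightarrow> op \<Rightarrow> op" where
  "kraus_map d X K v \<sigma> = (\<lambda>s t. \<Sum>k\<in>K. uchan d X (\<lambda>s x. v k (join X x s)) \<sigma> s t)"

lemma kraus_map_linear: "is_linear_map d X Y (kraus_map d X K v)"
  unfolding is_linear_map_def op_eq_def kraus_map_def uchan_def
  by (auto simp: sum_distrib_left sum.distrib algebra_simps intro!: sum.cong)

lemma kraus_map_cp: "finite K \<Longrightarrow> Ref \<notin> X \<Longrightarrow> Ref \<notin> Y \<Longrightarrow> is_cp d X Y (kraus_map d X K v)"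
  unfolding kraus_map_def by (intro is_cp_sum uchan_cp)

lemma kraus_map_tp:
  assumes "\<forall>x\<in>basis d X. \<forall>y\<in>basis d X.
    (\<Sum>s\<in>basis d Y. \<Sum>k\<in>K. v k (join X x s) * cnj (v k (join X y s))) = id_op x y"
  shows "is_tp d X Y (kraus_map d X K v)"
  unfolding is_tp_def
proof
  fix \<sigma>
  have "trace d Y (kraus_map d X K v \<sigma>) = (\<Sum>s\<in>basis d Y. \<Sum>k\<in>K. \<Sum>x\<in>basis d X. \<Sum>y\<in>basis d X.
      \<sigma> x y * (v k (join X x s) * cnj (v k (join X y s))))"
    unfolding trace_def kraus_map_def uchan_def by (simp add: ac_simps)
  also have "\<dots> = (\<Sum>x\<in>basis d X. \<Sum>y\<in>basis d X. \<sigma> x y *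
      (\<Sum>s\<in>basis d Y. \<Sum>k\<in>K. v k (join X x s) * cnj (v k (join X y s))))"
    unfolding sum_distrib_left by (rule sum_swap_inner_outer)
  also have "\<dots> = (\<Sum>x\<in>basis d X. \<Sum>y\<in>basis d X. \<sigma> x y * id_op x y)"
    using assms by (intro sum.cong refl) auto
  also have "\<dots> = trace d X \<sigma>"
    unfolding trace_def id_op_def by (simp add: if_distrib sum.delta cong: if_cong)
  finally show "trace d Y (kraus_map d X K v \<sigma>) = trace d X \<sigma>" .
qed

lemma choi_kraus_map:
  assumes XY: "X \<inter> Y = {}" and a: "a \<in> basis d (X \<union> Y)" and b: "b \<in> basis d (X \<union> Y)"
  shows "choi X Y (kraus_map d X K v) a b = (\<Sum>k\<in>K. v k a * cnj (v k b))"
proof -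
  have ra: "restr X a \<in> basis d X" and rb: "restr X b \<in> basis d X"
    using a b by (auto intro: restr_in_basis)
  have ja: "join X (restr X a) (restr Y a) = a" and jb: "join X (restr X b) (restr Y b) = b"
    using a b XY by (auto simp: fun_eq_iff join_def restr_def basis_def)
  have "uchan d X (\<lambda>s x. v k (join X x s)) (unit_op (restr X a) (restr X b)) (restr Y a) (restr Y b) =
    (\<Sum>x\<in>basis d X. (if x = restr X a then 1 else 0) * (\<Sum>x'\<in>basis d X. (if x' = restr X b then 1 else 0) *
       (v k (join X x (restr Y a)) * cnj (v k (join X x' (restr Y b))))))" for k
    unfolding uchan_def unit_op_def sum_distrib_left by (intro sum.cong refl) simp
  then show ?thesis unfolding choi_def kraus_map_def using ra rb ja jb by (simp add: sum_indicator_mult(1))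
qed

lemma cptp_choi_of_kraus:
  assumes XY: "X \<inter> Y = {}" and R: "Ref \<notin> X" "Ref \<notin> Y" and K: "finite K"
    and J: "\<forall>a\<in>basis d (X \<union> Y). \<forall>b\<in>basis d (X \<union> Y). J a b = (\<Sum>k\<in>K. v k a * cnj (v k b))"
    and tp: "\<forall>x\<in>basis d X. \<forall>y\<in>basis d X.
      (\<Sum>s\<in>basis d Y. \<Sum>k\<in>K. v k (join X x s) * cnj (v k (join X y s))) = id_op x y"
  shows "is_cptp_choi d X Y J"
  unfolding is_cptp_choi_def is_cptp_def
proof (intro exI conjI)
  show "op_eq d (X \<union> Y) (choi X Y (kraus_map d X K v)) J"
    using choi_kraus_map[OF XY] J by (auto simp: op_eq_def)
qed (use kraus_map_linear kraus_map_cp[OF K R] kraus_map_tp[OF tp] in auto)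

lemma choi_tp:
  assumes tp: "is_tp d X Y \<Phi>" and XY: "X \<inter> Y = {}" and x: "x \<in> basis d X" and y: "y \<in> basis d X"
  shows "(\<Sum>s\<in>basis d Y. choi X Y \<Phi> (join X x s) (join X y s)) = id_op x y"
proof -
  have "(\<Sum>s\<in>basis d Y. choi X Y \<Phi> (join X x s) (join X y s)) = (\<Sum>s\<in>basis d Y. \<Phi> (unit_op x y) s s)"
    unfolding choi_def using x y XY by (intro sum.cong refl) (simp add: restr_join_left restr_join_right)
  also have "\<dots> = trace d X (unit_op x y)" using tp unfolding is_tp_def trace_def by metis
  also have "\<dots> = id_op x y" unfolding trace_def unit_op_def id_op_def using x
    by (cases "x = y") (auto intro!: sum.neutral)
  finally show ?thesis .
qed

lemma bij_betw_join_enum: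
  assumes h: "bij_betw h {..<k} (basis d X)" and XY: "X \<inter> Y = {}" and R: "Ref \<notin> X" "Ref \<notin> Y"
  shows "bij_betw (\<lambda>a. join X (h (a Ref)) (restr (- {Ref}) a))
    (basis (d(Ref := k)) (insert Ref Y)) (basis d (X \<union> Y))"
proof (rule bij_betwI[where g = "\<lambda>p. (restr Y p)(Ref := inv_into {..<k} h (restr X p))"])
  have hin: "h j \<in> basis d X" if "j < k" for j using h that by (auto simp: bij_betw_def)
  have inv: "inv_into {..<k} h x < k" "h (inv_into {..<k} h x) = x" if "x \<in> basis d X" for x
    using h that by (metis bij_betw_def inv_into_into lessThan_iff, metis bij_betw_def f_inv_into_f)
  have inv_h: "inv_into {..<k} h (h j) = j" if "j < k" for j
    using h that by (simp add: bij_betw_def inv_into_f_f)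
  show "(\<lambda>a. join X (h (a Ref)) (restr (- {Ref}) a)) \<in> basis (d(Ref := k)) (insert Ref Y) \<rightarrow> basis d (X \<union> Y)"
    using hin R XY by (fastforce simp: basis_def join_def restr_def)
  show "(\<lambda>p. (restr Y p)(Ref := inv_into {..<k} h (restr X p))) \<in> basis d (X \<union> Y) \<rightarrow> basis (d(Ref := k)) (insert Ref Y)"
    using inv(1) restr_in_basis R by (fastforce simp: basis_def restr_def)
  show "(restr Y (join X (h (a Ref)) (restr (- {Ref}) a)))(Ref := inv_into {..<k} h
      (restr X (join X (h (a Ref)) (restr (- {Ref}) a)))) = a"
    if a: "a \<in> basis (d(Ref := k)) (insert Ref Y)" for a
  proof -
    have "a Ref < k" using a by (auto simp: basis_def)
    then have "restr X (join X (h (a Ref)) (restr (- {Ref}) a)) = h (a Ref)"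
      using hin restr_join_left by blast
    then show ?thesis using a inv_h[OF \<open>a Ref < k\<close>] R XY
      by (auto simp: basis_def join_def restr_def fun_eq_iff)
  qed
  show "join X (h (((restr Y p)(Ref := inv_into {..<k} h (restr X p))) Ref))
      (restr (- {Ref}) ((restr Y p)(Ref := inv_into {..<k} h (restr X p)))) = p"
    if "p \<in> basis d (X \<union> Y)" for p
    using that inv(2)[OF restr_in_basis[OF that]] R
    by (auto simp: basis_def join_def restr_def fun_eq_iff)
qed

text \<open>The Choi operator is the image under \<open>id \<otimes> \<Phi>\<close> of the (unnormalised) maximally
  entangled state between the reference system and \<open>X\<close>.\<close>
lemma choi_psd:
  assumes lin: "is_linear_map d X Y \<Phi>" and cp: "is_cp d X Y \<Phi>"
    and XY: "X \<inter> Y = {}" and R: "Ref \<notin> X" "Ref \<notin> Y"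
  shows "psd_on (basis d (X \<union> Y)) (choi X Y \<Phi>)"
proof (cases "basis d X = {}")
  case True
  then have "basis d (X \<union> Y) = {}" using restr_in_basis[of _ d "X \<union> Y" X] by blast
  then show ?thesis by (simp add: psd_on_def qform_def)
next
  case False
  define k where "k = card (basis d X)"
  have k: "1 \<le> k" using False unfolding k_def by (simp add: Suc_le_eq card_gt_0_iff)
  obtain h where h: "bij_betw h {..<k} (basis d X)"
    using ex_bij_betw_nat_finite[OF finite_basis[of d X]] unfolding k_def atLeast0LessThan by blast
  define BY where "BY = basis (d(Ref := k)) (insert Ref Y)"
  define g where "g a = join X (h (a Ref)) (restr (- {Ref}) a)" for a
  define f where "f c = (if c Ref < k \<and> restr X c = h (c Ref) then 1 else 0 :: complex)" for c
  have psd: "psd_on BY (ampl \<Phi> (proj f))"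
    using cp k psd_on_proj unfolding is_cp_def psd_iff_psd_on BY_def by blast
  have "ampl \<Phi> (proj f) a b = choi X Y \<Phi> (g a) (g b)" if a: "a \<in> BY" and b: "b \<in> BY" for a b
  proof -
    have Ref_lt: "a Ref < k" "b Ref < k" using a b by (auto simp: BY_def basis_def)
    have hin: "h (a Ref) \<in> basis d X" "h (b Ref) \<in> basis d X" using h Ref_lt by (auto simp: bij_betw_def)
    have rY: "restr (- {Ref}) a \<in> basis d Y" "restr (- {Ref}) b \<in> basis d Y"
      using a b R by (auto simp: BY_def basis_def restr_def)
    have "op_eq d X (\<lambda>x y. proj f (join {Ref} a x) (join {Ref} b y)) (unit_op (h (a Ref)) (h (b Ref)))"
      using R Ref_lt restr_join_right[of _ d X "{Ref}"]
      by (auto simp: op_eq_def proj_def f_def unit_op_def join_def[of "{Ref}"])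
    then have "op_eq d Y (\<Phi> (\<lambda>x y. proj f (join {Ref} a x) (join {Ref} b y))) (\<Phi> (unit_op (h (a Ref)) (h (b Ref))))"
      using lin unfolding is_linear_map_def by blast
    then show ?thesis
      using rY hin XY unfolding op_eq_def ampl_def choi_def g_def
      by (simp add: restr_join_left restr_join_right)
  qed
  then have "qform BY (ampl \<Phi> (proj f)) (\<lambda>a. v (g a)) = qform (basis d (X \<union> Y)) (choi X Y \<Phi>) v" for v
    using qform_reindex[OF bij_betw_join_enum[OF h XY R, folded BY_def g_def]]
    by (simp add: qform_def)
  then show ?thesis using psd unfolding psd_on_def by metis
qed

lemma cptp_kraus:
  assumes cptp: "is_cptp d X Y \<Phi>" and XY: "X \<inter> Y = {}" and R: "Ref \<notin> X" "Ref \<notin> Y"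
  obtains n :: nat and m where
    "\<forall>a\<in>basis d (X \<union> Y). \<forall>b\<in>basis d (X \<union> Y). choi X Y \<Phi> a b = (\<Sum>k<n. m k a * cnj (m k b))"
    "\<forall>x\<in>basis d X. \<forall>y\<in>basis d X.
       (\<Sum>q\<in>basis d Y. \<Sum>k<n. m k (join X x q) * cnj (m k (join X y q))) = id_op x y"
proof -
  obtain n :: nat and m where
    gram: "\<forall>a\<in>basis d (X \<union> Y). \<forall>b\<in>basis d (X \<union> Y). choi X Y \<Phi> a b = (\<Sum>k<n. m k a * cnj (m k b))"
    using psd_on_gram[OF finite_basis choi_psd] cptp XY R unfolding is_cptp_def by blast
  moreover have "(\<Sum>q\<in>basis d Y. \<Sum>k<n. m k (join X x q) * cnj (m k (join X y q))) = id_op x y"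
    if "x \<in> basis d X" "y \<in> basis d X" for x y
  proof -
    have "(\<Sum>q\<in>basis d Y. \<Sum>k<n. m k (join X x q) * cnj (m k (join X y q))) =
        (\<Sum>q\<in>basis d Y. choi X Y \<Phi> (join X x q) (join X y q))"
      using gram join_in_basis[OF that(1) _ XY] join_in_basis[OF that(2) _ XY] by (intro sum.cong refl) simp
    also have "\<dots> = id_op x y" using choi_tp[OF _ XY that] cptp unfolding is_cptp_def by blast
    finally show ?thesis .
  qed
  ultimately show ?thesis using that by blast
qed

section \<open>Unitaries and double kets\<close>

lemma is_unitary_cong:
  "basis d1 X = basis d2 X \<Longrightarrow> basis d1 Y = basis d2 Y \<Longrightarrow> is_unitary d1 X Y U = is_unitary d2 X Y U"
  by (simp add: is_unitary_def)

lemma unitary_scale: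
  assumes U: "is_unitary d X Y U" and c: "cmod c = 1"
  shows "is_unitary d X Y (\<lambda>y x. c * U y x)"
proof -
  have cc: "cnj c * c = 1" using c by (metis complex_norm_square mult.commute of_real_1 power_one)
  have "(\<Sum>y\<in>basis d Y. cnj (c * U y x) * (c * U y x')) = cnj c * c * (\<Sum>y\<in>basis d Y. cnj (U y x) * U y x')"
    "(\<Sum>x\<in>basis d X. c * U y x * cnj (c * U y' x)) = cnj c * c * (\<Sum>x\<in>basis d X. U y x * cnj (U y' x))"
    for x x' y y' by (simp_all add: sum_distrib_left ac_simps)
  then show ?thesis using U cc unfolding is_unitary_def by simp
qed

lemma unitary_choi_iff:
  "is_unitary_choi d X Y J \<longleftrightarrow> (\<exists>U. is_unitary d X Y U \<and>
      (\<forall>a\<in>basis d (X \<union> Y). \<forall>b\<in>basis d (X \<union> Y). J a b = dket X Y U a * cnj (dket X Y U b)))"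
proof -
  have "choi X Y (uchan d X U) a b = dket X Y U a * cnj (dket X Y U b)"
    if "a \<in> basis d (X \<union> Y)" "b \<in> basis d (X \<union> Y)" for U a b
  proof -
    have "restr X a \<in> basis d X" "restr X b \<in> basis d X" using that by (auto intro: restr_in_basis)
    moreover have "choi X Y (uchan d X U) a b = (\<Sum>x\<in>basis d X. (if x = restr X a then 1 else 0) *
        (\<Sum>x'\<in>basis d X. (if x' = restr X b then 1 else 0) * (U (restr Y a) x * cnj (U (restr Y b) x'))))"
      unfolding choi_def uchan_def unit_op_def sum_distrib_left by (intro sum.cong refl) auto
    ultimately show ?thesis by (simp add: sum_indicator_mult(1) dket_def)
  qed
  then show ?thesis unfolding is_unitary_choi_def op_eq_def by auto
qed

lemma dket_nonzero:
  assumes U: "is_unitary d X Y U" and x: "x \<in> basis d X" and XY: "X \<inter> Y = {}"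
  shows "\<exists>p\<in>basis d (X \<union> Y). dket X Y U p \<noteq> 0"
proof (rule ccontr)
  assume "\<not> ?thesis"
  then have "U y x = 0" if "y \<in> basis d Y" for y
    using join_in_basis[OF x that XY] restr_join_left[OF x] restr_join_right[OF that XY]
    unfolding dket_def by metis
  moreover have "(\<Sum>y\<in>basis d Y. cnj (U y x) * U y x) = 1"
    using U x unfolding is_unitary_def id_op_def by auto
  ultimately show False by simp
qed

lemma unitary_dket_partial_trace:
  assumes U: "is_unitary d X Y U" and XY: "X \<inter> Y = {}" and x: "x \<in> basis d X" and y: "y \<in> basis d X"
  shows "(\<Sum>q\<in>basis d Y. dket X Y U (join X x q) * cnj (dket X Y U (join X y q))) = id_op x y"
proof -
  have "(\<Sum>q\<in>basis d Y. dket X Y U (join X x q) * cnj (dket X Y U (join X y q))) =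
      cnj (\<Sum>q\<in>basis d Y. cnj (U q x) * U q y)"
    unfolding dket_def cnj_sum using x y XY
    by (intro sum.cong refl) (simp add: restr_join_left restr_join_right mult.commute)
  also have "\<dots> = id_op x y" using U x y unfolding is_unitary_def id_op_def by simp
  finally show ?thesis .
qed

lemma rank_one_phase:
  assumes ab: "\<forall>x\<in>B. \<forall>y\<in>B. a x * cnj (a y) = b x * cnj (b y)" and x0: "x0 \<in> B" and nz: "b x0 \<noteq> 0"
  shows "\<exists>c. cmod c = 1 \<and> (\<forall>x\<in>B. a x = c * b x)"
proof -
  have e0: "a x0 * cnj (a x0) = b x0 * cnj (b x0)" using ab x0 by blast
  then have an: "a x0 \<noteq> 0" using nz by auto
  define c where "c = a x0 / b x0"
  have "(cmod (a x0))\<^sup>2 = (cmod (b x0))\<^sup>2"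
    using e0 by (metis complex_norm_square of_real_eq_iff)
  then have "cmod c = 1" using nz by (simp add: c_def norm_divide power2_eq_iff_nonneg)
  moreover have "a x = c * b x" if x: "x \<in> B" for x
  proof -
    have "a x * cnj (a x0) = b x * cnj (b x0)" using ab x x0 by blast
    then have "a x = b x * cnj (b x0) / cnj (a x0)" using an by (simp add: eq_divide_eq)
    moreover have "cnj (b x0) / cnj (a x0) = c"
      unfolding c_def using e0 an nz by (subst frac_eq_eq) (auto simp: mult.commute)
    ultimately show ?thesis by (metis mult.commute times_divide_eq_right)
  qed
  ultimately show ?thesis by blast
qed

section \<open>Linking a process vector with local operations\<close>

abbreviation slots :: "party set" where "slots \<equiv> {AI, AO, BI, BO}"
abbreviation link_sys :: "party set" where "link_sys \<equiv> {P, F, AI', AO', BI', BO'}"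
abbreviation alice_sys :: "party set" where "alice_sys \<equiv> {AI, AI', AO, AO'}"
abbreviation bob_sys :: "party set" where "bob_sys \<equiv> {BI, BI', BO, BO'}"

text \<open>In the sum defining \<open>link_out\<close>, the identity factors of the two embeddings force the
  intermediate index to agree with the output index on \<open>P, F\<close> and with the input index on
  the ancillas.\<close>
lemma link_out_summand:
  assumes s: "s \<in> basis d link_sys" and t: "t \<in> basis d link_sys"
    and z: "z \<in> basis d slots" and r: "r \<in> basis d link_sys"
  shows "embed mainS allS (ptranspose slots W) (join link_sys s z) (join slots z' r) *
      embed {AI, AI', AO, AO', BI, BI', BO, BO'} allS (tensor alice_sys bob_sys Mx My) (join slots z' r) (join link_sys t z) =
    (if r = join {P, F} t s then
      W (restr mainS (join slots z' s)) (restr mainS (join slots z t)) *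
      Mx (restr alice_sys (join slots z' s)) (restr alice_sys (join slots z t)) *
      My (restr bob_sys (join slots z' s)) (restr bob_sys (join slots z t)) else 0)"
proof -
  have sys: "allS - mainS = {AI', AO', BI', BO'}" "allS - {AI, AI', AO, AO', BI, BI', BO, BO'} = {P, F}"
    by (auto simp: allS_def mainS_def)
  have ids: "id_op (restr {AI', AO', BI', BO'} (join link_sys s z)) (restr {AI', AO', BI', BO'} (join slots z' r)) *
      id_op (restr {P, F} (join slots z' r)) (restr {P, F} (join link_sys t z)) =
      (if r = join {P, F} t s then 1 else 0)"
    using r s t unfolding id_op_def by (auto simp: party_fun_eq_iff restr_def join_def basis_def)
  have "join slots (restr mainS (join slots z' r)) (restr mainS (join link_sys s z)) = restr mainS (join slots z' s)"
    "join slots (restr mainS (join link_sys s z)) (restr mainS (join slots z' r)) = restr mainS (join slots z t)"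
    if "r = join {P, F} t s"
    using that z by (auto simp: party_fun_eq_iff restr_def join_def basis_def mainS_def)
  moreover have "restr alice_sys (restr {AI, AI', AO, AO', BI, BI', BO, BO'} (join slots z' r)) = restr alice_sys (join slots z' s)"
    "restr bob_sys (restr {AI, AI', AO, AO', BI, BI', BO, BO'} (join slots z' r)) = restr bob_sys (join slots z' s)"
    if "r = join {P, F} t s"
    using that by (auto simp: party_fun_eq_iff restr_def join_def)
  moreover have "restr alice_sys (restr {AI, AI', AO, AO', BI, BI', BO, BO'} (join link_sys t z)) = restr alice_sys (join slots z t)"
    "restr bob_sys (restr {AI, AI', AO, AO', BI, BI', BO, BO'} (join link_sys t z)) = restr bob_sys (join slots z t)"
    using z t by (auto simp: party_fun_eq_iff restr_def join_def basis_def)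
  ultimately show ?thesis
    using ids unfolding embed_def tensor_def ptranspose_def sys
    by (cases "r = join {P, F} t s") (auto simp: ac_simps)
qed

lemma link_out_eq:
  assumes s: "s \<in> basis d link_sys" and t: "t \<in> basis d link_sys"
  shows "link_out d W Mx My s t =
    (\<Sum>z\<in>basis d slots. \<Sum>z'\<in>basis d slots.
       W (restr mainS (join slots z' s)) (restr mainS (join slots z t)) *
       Mx (restr alice_sys (join slots z' s)) (restr alice_sys (join slots z t)) *
       My (restr bob_sys (join slots z' s)) (restr bob_sys (join slots z t)))"
proof -
  have r0: "join {P, F} t s \<in> basis d link_sys" using s t by (auto simp: basis_def join_def)
  have "allS = slots \<union> link_sys" by (auto simp: allS_def)
  then have split: "(\<Sum>u\<in>basis d allS. f u) = (\<Sum>z'\<in>basis d slots. \<Sum>r\<in>basis d link_sys. f (join slots z' r))"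
    for f :: "bidx \<Rightarrow> complex" using sum_basis_union[of slots link_sys] by simp
  have "link_out d W Mx My s t = (\<Sum>z\<in>basis d slots. \<Sum>z'\<in>basis d slots. \<Sum>r\<in>basis d link_sys.
      if r = join {P, F} t s then
        W (restr mainS (join slots z' s)) (restr mainS (join slots z t)) *
        Mx (restr alice_sys (join slots z' s)) (restr alice_sys (join slots z t)) *
        My (restr bob_sys (join slots z' s)) (restr bob_sys (join slots z t)) else 0)"
    unfolding link_out_def ptrace_def op_mult_def split
    by (intro sum.cong refl) (simp add: link_out_summand[OF s t])
  then show ?thesis using r0 by simp
qed

text \<open>Linking rank-one operators yields the rank-one operator of this vector (\<open>link_out_proj\<close>).\<close>
definition link_vec :: "dims \<Rightarrow> vec \<Rightarrow> vec \<Rightarrow> vec \<Rightarrow> vec" where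
  "link_vec d w m n s = (\<Sum>z\<in>basis d slots.
     w (restr mainS (join slots z s)) * m (restr alice_sys (join slots z s)) * n (restr bob_sys (join slots z s)))"

lemma link_out_kraus:
  assumes s: "s \<in> basis d link_sys" and t: "t \<in> basis d link_sys"
    and Mx: "\<forall>a\<in>basis d alice_sys. \<forall>b\<in>basis d alice_sys. Mx a b = (\<Sum>k\<in>K. m k a * cnj (m k b))"
    and My: "\<forall>a\<in>basis d bob_sys. \<forall>b\<in>basis d bob_sys. My a b = (\<Sum>l\<in>L. n l a * cnj (n l b))"
  shows "link_out d (proj w) Mx My s t = (\<Sum>k\<in>K. \<Sum>l\<in>L. link_vec d w (m k) (n l) s * cnj (link_vec d w (m k) (n l) t))"
proof -
  have in_basis: "restr alice_sys (join slots z s) \<in> basis d alice_sys" "restr bob_sys (join slots z s) \<in> basis d bob_sys"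
    if "z \<in> basis d slots" "s \<in> basis d link_sys" for z s
    using that by (auto simp: basis_def restr_def join_def)
  have "link_out d (proj w) Mx My s t = (\<Sum>z\<in>basis d slots. \<Sum>z'\<in>basis d slots. \<Sum>k\<in>K. \<Sum>l\<in>L.
      (w (restr mainS (join slots z' s)) * m k (restr alice_sys (join slots z' s)) * n l (restr bob_sys (join slots z' s))) *
      cnj (w (restr mainS (join slots z t)) * m k (restr alice_sys (join slots z t)) * n l (restr bob_sys (join slots z t))))"
    unfolding link_out_eq[OF s t] using Mx My in_basis s t
    by (intro sum.cong refl) (simp add: proj_def sum_distrib_left sum_distrib_right algebra_simps)
  also have "\<dots> = (\<Sum>k\<in>K. \<Sum>l\<in>L. link_vec d w (m k) (n l) s * cnj (link_vec d w (m k) (n l) t))"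
    unfolding sum_swap_inner_outer[of _ "basis d slots"] link_vec_def cnj_sum sum_product
    by (subst sum.swap) (simp add: mult.commute)
  finally show ?thesis .
qed

lemma link_out_proj:
  assumes "s \<in> basis d link_sys" "t \<in> basis d link_sys"
  shows "link_out d (proj w) (proj m) (proj n) s t = link_vec d w m n s * cnj (link_vec d w m n t)"
  using link_out_kraus[OF assms, where K = "{()}" and L = "{()}" and m = "\<lambda>_. m" and n = "\<lambda>_. n"
      and Mx = "proj m" and My = "proj n"]
  by (simp add: proj_def)

lemma basis_link_sys: "basis d ({P, AI', BI'} \<union> {F, AO', BO'}) = basis d link_sys"
  by (simp add: insert_commute)

text \<open>Purity fixes the linked vector only up to a global phase, which is absorbed into the
  unitary.\<close>
lemma link_vec_unitary:
  fixes d :: dims and a1 a2 b1 b2 :: nat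
  defines "D \<equiv> anc_dims d a1 a2 b1 b2"
  assumes pure: "is_pure d (proj w)"
    and pos: "1 \<le> d P" "1 \<le> a1" "1 \<le> a2" "1 \<le> b1" "1 \<le> b2"
    and dims: "d AI * a1 = d AO * a2" "d BI * b1 = d BO * b2" "d P * a1 * b1 = d F * a2 * b2"
    and U: "is_unitary D {AI, AI'} {AO, AO'} U" and V: "is_unitary D {BI, BI'} {BO, BO'} V"
  obtains X where "is_unitary D {P, AI', BI'} {F, AO', BO'} X"
    and "\<forall>s\<in>basis D link_sys.
      link_vec D w (dket {AI, AI'} {AO, AO'} U) (dket {BI, BI'} {BO, BO'} V) s = dket {P, AI', BI'} {F, AO', BO'} X s"
proof -
  define v where "v = link_vec D w (dket {AI, AI'} {AO, AO'} U) (dket {BI, BI'} {BO, BO'} V)"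
  have "is_unitary_choi D {P, AI', BI'} {F, AO', BO'}
      (link_out D (proj w) (proj (dket {AI, AI'} {AO, AO'} U)) (proj (dket {BI, BI'} {BO, BO'} V)))"
    using pure[unfolded is_pure_def, rule_format, of a1 a2 b1 b2 U V] pos dims U V unfolding D_def by simp
  then obtain X0 where X0: "is_unitary D {P, AI', BI'} {F, AO', BO'} X0"
    and J: "\<forall>a\<in>basis D link_sys. \<forall>b\<in>basis D link_sys. v a * cnj (v b) =
      dket {P, AI', BI'} {F, AO', BO'} X0 a * cnj (dket {P, AI', BI'} {F, AO', BO'} X0 b)"
    unfolding unitary_choi_iff basis_link_sys v_def using link_out_proj by auto
  have "(\<lambda>_. 0) \<in> basis D {P, AI', BI'}" using pos by (auto simp: D_def anc_dims_def basis_def)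
  then obtain p where p: "p \<in> basis D link_sys" "dket {P, AI', BI'} {F, AO', BO'} X0 p \<noteq> 0"
    using dket_nonzero[OF X0] basis_link_sys by fastforce
  obtain c where c: "cmod c = 1" "\<forall>s\<in>basis D link_sys. v s = c * dket {P, AI', BI'} {F, AO', BO'} X0 s"
    using rank_one_phase[of "basis D link_sys" v "dket {P, AI', BI'} {F, AO', BO'} X0" p] J p by blast
  show ?thesis
  proof
    show "is_unitary D {P, AI', BI'} {F, AO', BO'} (\<lambda>y x. c * X0 y x)" by (rule unitary_scale[OF X0 c(1)])
  qed (use c in \<open>simp add: v_def dket_def\<close>)
qed

section \<open>Time reversal\<close>

fun mirror :: "party \<Rightarrow> party" where
  "mirror P = F" | "mirror F = P" | "mirror AI = AO" | "mirror AO = AI" | "mirror BI = BO" | "mirror BO = BI"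
| "mirror AI' = AO'" | "mirror AO' = AI'" | "mirror BI' = BO'" | "mirror BO' = BI'" | "mirror Ref = Ref"

lemma mirror_mirror [simp]: "mirror (mirror l) = l"
  by (cases l) auto

definition mirror_idx :: "bidx \<Rightarrow> bidx" where
  "mirror_idx x = x \<circ> mirror"

lemma mirror_idx_mirror_idx [simp]: "mirror_idx (mirror_idx x) = x"
  by (simp add: mirror_idx_def fun_eq_iff)

lemma mirror_idx_eq_iff [simp]: "mirror_idx x = mirror_idx y \<longleftrightarrow> x = y"
  by (metis mirror_idx_mirror_idx)

definition mirror_invariant :: "dims \<Rightarrow> bool" where
  "mirror_invariant d \<longleftrightarrow> (\<forall>l. d (mirror l) = d l)"

lemma mirror_invariant_anc_dims:
  "d AI = d AO \<Longrightarrow> d BI = d BO \<Longrightarrow> d P = d F \<Longrightarrow> mirror_invariant (anc_dims d a a b b)"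
  unfolding mirror_invariant_def anc_dims_def by (intro allI, case_tac l) auto

lemma mirror_image:
  "mirror ` slots = slots" "mirror ` mainS = mainS" "mirror ` link_sys = link_sys"
  "mirror ` alice_sys = alice_sys" "mirror ` bob_sys = bob_sys"
  "mirror ` {AI, AI'} = {AO, AO'}" "mirror ` {BI, BI'} = {BO, BO'}" "mirror ` {P, AI', BI'} = {F, AO', BO'}"
  by (auto simp: mainS_def)

lemma mirror_idx_in_basis:
  assumes "mirror_invariant d" "x \<in> basis d S"
  shows "mirror_idx x \<in> basis d (mirror ` S)"
proof -
  have "l \<in> mirror ` S \<longleftrightarrow> mirror l \<in> S" for l by force
  then show ?thesis using assms by (auto simp: mirror_invariant_def basis_def mirror_idx_def)
qed

lemma bij_betw_mirror_idx:
  assumes "mirror_invariant d"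
  shows "bij_betw mirror_idx (basis d S) (basis d (mirror ` S))"
proof (rule bij_betwI[where g = mirror_idx])
  show "mirror_idx \<in> basis d (mirror ` S) \<rightarrow> basis d S"
    using mirror_idx_in_basis[OF assms, of _ "mirror ` S"] by (simp add: image_image)
qed (use mirror_idx_in_basis[OF assms] in auto)

lemma mirror_idx_restr: "mirror_idx (restr S x) = restr (mirror ` S) (mirror_idx x)"
  by (auto simp: mirror_idx_def restr_def fun_eq_iff image_iff)

lemma mirror_idx_join: "mirror_idx (join S x y) = join (mirror ` S) (mirror_idx x) (mirror_idx y)"
  by (auto simp: mirror_idx_def join_def fun_eq_iff image_iff)

lemma swap_idx_restr_mainS: "swap_idx (restr mainS x) = mirror_idx (restr mainS x)"
  by (simp add: party_fun_eq_iff swap_idx_def mirror_idx_def restr_def mainS_def)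

definition mirror_adj :: "op \<Rightarrow> op" where
  "mirror_adj U = (\<lambda>y x. cnj (U (mirror_idx x) (mirror_idx y)))"

lemma unitary_mirror_adj:
  assumes U: "is_unitary d X Y U" and d: "mirror_invariant d" and XY: "Y = mirror ` X"
  shows "is_unitary d X Y (mirror_adj U)"
proof -
  have YX: "X = mirror ` Y" using XY by (simp add: image_image)
  have "(\<Sum>y\<in>basis d Y. U (mirror_idx x) (mirror_idx y) * cnj (U (mirror_idx x') (mirror_idx y))) = id_op x x'"
    if "x \<in> basis d X" "x' \<in> basis d X" for x x'
    using U mirror_idx_in_basis[OF d that(1)] mirror_idx_in_basis[OF d that(2)]
      sum.reindex_bij_betw[OF bij_betw_mirror_idx[OF d, of Y], where g = "\<lambda>z. U (mirror_idx x) z * cnj (U (mirror_idx x') z)"]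
    unfolding is_unitary_def id_op_def XY by (simp add: image_image)
  moreover have "(\<Sum>x\<in>basis d X. cnj (U (mirror_idx x) (mirror_idx y)) * U (mirror_idx x) (mirror_idx y')) = id_op y y'"
    if "y \<in> basis d Y" "y' \<in> basis d Y" for y y'
    using U mirror_idx_in_basis[OF d that(1)] mirror_idx_in_basis[OF d that(2)]
      sum.reindex_bij_betw[OF bij_betw_mirror_idx[OF d, of X], where g = "\<lambda>z. cnj (U z (mirror_idx y)) * U z (mirror_idx y')"]
    unfolding is_unitary_def id_op_def XY by (simp add: image_image)
  ultimately show ?thesis unfolding is_unitary_def mirror_adj_def by (simp add: mult.commute)
qed

lemma dket_mirror_adj:
  "Y = mirror ` X \<Longrightarrow> dket X Y (mirror_adj U) s = cnj (dket X Y U (mirror_idx s))"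
  by (simp add: dket_def mirror_adj_def mirror_idx_restr image_image)

lemma link_vec_w_rev:
  assumes d: "mirror_invariant d"
  shows "link_vec d (w_rev w) (dket {AI, AI'} {AO, AO'} U) (dket {BI, BI'} {BO, BO'} V) s =
    cnj (link_vec d w (dket {AI, AI'} {AO, AO'} (mirror_adj U)) (dket {BI, BI'} {BO, BO'} (mirror_adj V))
      (mirror_idx s))"
proof -
  have "link_vec d w (dket {AI, AI'} {AO, AO'} (mirror_adj U)) (dket {BI, BI'} {BO, BO'} (mirror_adj V)) (mirror_idx s)
    = (\<Sum>z\<in>basis d slots. w (restr mainS (join slots (mirror_idx z) (mirror_idx s))) *
        dket {AI, AI'} {AO, AO'} (mirror_adj U) (restr alice_sys (join slots (mirror_idx z) (mirror_idx s))) *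
        dket {BI, BI'} {BO, BO'} (mirror_adj V) (restr bob_sys (join slots (mirror_idx z) (mirror_idx s))))"
    unfolding link_vec_def
    by (rule sum.reindex_bij_betw[OF bij_betw_mirror_idx[OF d, of slots, unfolded mirror_image], symmetric])
  also have "\<dots> = (\<Sum>z\<in>basis d slots. cnj (w_rev w (restr mainS (join slots z s)) *
        dket {AI, AI'} {AO, AO'} U (restr alice_sys (join slots z s)) *
        dket {BI, BI'} {BO, BO'} V (restr bob_sys (join slots z s))))"
  proof (rule sum.cong[OF refl])
    fix z
    show "w (restr mainS (join slots (mirror_idx z) (mirror_idx s))) *
        dket {AI, AI'} {AO, AO'} (mirror_adj U) (restr alice_sys (join slots (mirror_idx z) (mirror_idx s))) *
        dket {BI, BI'} {BO, BO'} (mirror_adj V) (restr bob_sys (join slots (mirror_idx z) (mirror_idx s))) =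
      cnj (w_rev w (restr mainS (join slots z s)) *
        dket {AI, AI'} {AO, AO'} U (restr alice_sys (join slots z s)) *
        dket {BI, BI'} {BO, BO'} V (restr bob_sys (join slots z s)))"
      by (simp only: w_rev_def swap_idx_restr_mainS dket_mirror_adj[OF mirror_image(6)[symmetric]]
          dket_mirror_adj[OF mirror_image(7)[symmetric]] mirror_image complex_cnj_mult complex_cnj_cnj
          mirror_idx_mirror_idx mirror_idx_restr mirror_idx_join)
  qed
  finally show ?thesis by (simp add: link_vec_def cnj_sum)
qed

lemma is_pure_w_rev:
  assumes dpos: "\<forall>l\<in>mainS. 1 \<le> d l" and dA: "d AI = d AO" and dB: "d BI = d BO" and dP: "d P = d F"
    and pure: "is_pure d (proj w)"
  shows "is_pure d (proj (w_rev w))"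
  unfolding is_pure_def
proof (intro allI impI)
  fix a1 a2 b1 b2 U V
  assume c: "1 \<le> a1 \<and> 1 \<le> a2 \<and> 1 \<le> b1 \<and> 1 \<le> b2 \<and>
    d AI * a1 = d AO * a2 \<and> d BI * b1 = d BO * b2 \<and> d P * a1 * b1 = d F * a2 * b2"
  assume UV: "is_unitary (anc_dims d a1 a2 b1 b2) {AI, AI'} {AO, AO'} U \<and>
    is_unitary (anc_dims d a1 a2 b1 b2) {BI, BI'} {BO, BO'} V"
  have d1: "1 \<le> d AI" "1 \<le> d BI" "1 \<le> d P" using dpos by (auto simp: mainS_def)
  then have a: "a2 = a1" "b2 = b1" using c dA dB by auto
  define D where "D = anc_dims d a1 a1 b1 b1"
  have D: "mirror_invariant D" unfolding D_def by (rule mirror_invariant_anc_dims[OF dA dB dP])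
  have "is_unitary D {AI, AI'} {AO, AO'} (mirror_adj U)" "is_unitary D {BI, BI'} {BO, BO'} (mirror_adj V)"
    using unitary_mirror_adj[OF _ D mirror_image(6)[symmetric]] unitary_mirror_adj[OF _ D mirror_image(7)[symmetric]]
      UV unfolding D_def a by auto
  then obtain X where X: "is_unitary D {P, AI', BI'} {F, AO', BO'} X"
    and vX: "\<forall>s\<in>basis D link_sys. link_vec D w (dket {AI, AI'} {AO, AO'} (mirror_adj U))
      (dket {BI, BI'} {BO, BO'} (mirror_adj V)) s = dket {P, AI', BI'} {F, AO', BO'} X s"
    using link_vec_unitary[of d w a1 a1 b1 b1, folded D_def]
      pure c d1 dA dB dP unfolding a by auto
  have "link_vec D (w_rev w) (dket {AI, AI'} {AO, AO'} U) (dket {BI, BI'} {BO, BO'} V) s =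
      dket {P, AI', BI'} {F, AO', BO'} (mirror_adj X) s" if "s \<in> basis D link_sys" for s
    using link_vec_w_rev[OF D] vX mirror_idx_in_basis[OF D that]
      dket_mirror_adj[OF mirror_image(8)[symmetric]] mirror_image by simp
  moreover have "is_unitary D {P, AI', BI'} {F, AO', BO'} (mirror_adj X)"
    by (rule unitary_mirror_adj[OF X D mirror_image(8)[symmetric]])
  ultimately show "is_unitary_choi (anc_dims d a1 a2 b1 b2) {P, AI', BI'} {F, AO', BO'}
      (link_out (anc_dims d a1 a2 b1 b2) (proj (w_rev w))
        (proj (dket {AI, AI'} {AO, AO'} U)) (proj (dket {BI, BI'} {BO, BO'} V)))"
    unfolding a D_def[symmetric] unitary_choi_iff basis_link_sys using link_out_proj by auto
qed

section \<open>Unitary dilation of Kraus families\<close>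

locale isometry_extension =
  fixes In :: "'i set" and Out :: "'q set" and ren :: "'i \<Rightarrow> 'q" and A :: "'i set" and V :: "'q \<Rightarrow> 'i \<Rightarrow> complex"
  assumes finite_In: "finite In" and finite_Out: "finite Out" and bij: "bij_betw ren In Out" and A_subset: "A \<subseteq> In"
    and isometry: "\<forall>a1\<in>A. \<forall>a2\<in>A. (\<Sum>q\<in>Out - ren ` A. cnj (V q a1) * V q a2) = (if a1 = a2 then 1 else 0)"
begin

definition C where "C = Out - ren ` A"

definition ren_inv where "ren_inv = inv_into In ren"

definition range_proj where "range_proj q o' = (\<Sum>a\<in>A. V q a * cnj (V o' a))"

text \<open>Halmos' unitary dilation of the isometry \<open>V\<close> from \<open>A\<close> into \<open>C\<close>: in block form from
  \<open>A \<union> (In - A)\<close> to \<open>C \<union> ren ` A\<close> it is \<open>[[V, 1 - V V\<^sup>*], [0, V\<^sup>*]]\<close>, where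
  \<open>ren\<close> identifies \<open>In - A\<close> with \<open>C\<close> and \<open>A\<close> with \<open>ren ` A\<close>.\<close>
definition unitary_ext where "unitary_ext q i = (if i \<in> A then (if q \<in> C then V q i else 0)
   else (if q \<in> C then (if q = ren i then 1 else 0) - range_proj q (ren i) else cnj (V (ren i) (ren_inv q))))"

lemma finite_A: "finite A" using finite_In A_subset finite_subset by blast

lemma finite_C: "finite C" using finite_Out by (simp add: C_def)

lemma isometry_C: "a1 \<in> A \<Longrightarrow> a2 \<in> A \<Longrightarrow> (\<Sum>q\<in>C. cnj (V q a1) * V q a2) = (if a1 = a2 then 1 else 0)"
  using isometry by (simp add: C_def)

lemma inj_ren: "inj_on ren In" using bij by (simp add: bij_betw_def)

lemma ren_in: "i \<in> In \<Longrightarrow> ren i \<in> Out" using bij by (auto simp: bij_betw_def)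

lemma ren_inv_ren: "i \<in> In \<Longrightarrow> ren_inv (ren i) = i" using inj_ren by (simp add: ren_inv_def)

lemma ren_ren_inv: "q \<in> Out \<Longrightarrow> ren (ren_inv q) = q" using bij by (simp add: ren_inv_def bij_betw_def f_inv_into_f)

lemma ren_inv_in: "q \<in> Out \<Longrightarrow> ren_inv q \<in> In" using bij by (auto simp: ren_inv_def bij_betw_def inv_into_into)

lemma ren_notin_A: "i \<in> In \<Longrightarrow> i \<notin> A \<Longrightarrow> ren i \<in> C"
  using inj_ren A_subset ren_in by (auto simp: C_def inj_on_def)

lemma ren_A_notin_C: "i \<in> A \<Longrightarrow> ren i \<notin> C" by (simp add: C_def)

lemma ren_inv_C: "q \<in> C \<Longrightarrow> ren_inv q \<notin> A" using ren_ren_inv by (force simp: C_def)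

lemma ren_inv_notin_C: "q \<in> Out \<Longrightarrow> q \<notin> C \<Longrightarrow> ren_inv q \<in> A" using ren_inv_ren A_subset by (auto simp: C_def)

lemma sum_Out: "(\<Sum>q\<in>Out. f q) = (\<Sum>q\<in>C. f q) + (\<Sum>a\<in>A. f (ren a))"
proof -
  have Out: "Out = C \<union> ren ` A" using A_subset ren_in by (auto simp: C_def)
  have "(\<Sum>q\<in>Out. f q) = (\<Sum>q\<in>C \<union> ren ` A. f q)" by (rule sum.cong[OF Out]) simp
  also have "\<dots> = (\<Sum>q\<in>C. f q) + (\<Sum>q\<in>ren ` A. f q)"
    by (rule sum.union_disjoint) (auto simp: finite_Out finite_A C_def)
  also have "(\<Sum>q\<in>ren ` A. f q) = (\<Sum>a\<in>A. f (ren a))"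
    using inj_ren A_subset by (simp add: sum.reindex inj_on_subset)
  finally show ?thesis .
qed

lemma range_proj_cnj: "cnj (range_proj q o') = range_proj o' q" unfolding range_proj_def cnj_sum by (simp add: mult.commute)

lemma range_proj_idem: "(\<Sum>q\<in>C. range_proj o1 q * range_proj q o2) = range_proj o1 o2"
proof -
  have "(\<Sum>q\<in>C. range_proj o1 q * range_proj q o2) = (\<Sum>q\<in>C. \<Sum>a\<in>A. \<Sum>b\<in>A. V o1 a * (cnj (V q a) * V q b) * cnj (V o2 b))"
    unfolding range_proj_def sum_product by (intro sum.cong refl) (simp add: ac_simps)
  also have "\<dots> = (\<Sum>a\<in>A. \<Sum>b\<in>A. \<Sum>q\<in>C. V o1 a * (cnj (V q a) * V q b) * cnj (V o2 b))"
    by (subst sum.swap) (rule sum.cong[OF refl], rule sum.swap)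
  also have "\<dots> = (\<Sum>a\<in>A. \<Sum>b\<in>A. V o1 a * (\<Sum>q\<in>C. cnj (V q a) * V q b) * cnj (V o2 b))"
    by (simp add: sum_distrib_left sum_distrib_right)
  also have "\<dots> = (\<Sum>a\<in>A. \<Sum>b\<in>A. V o1 a * (if a = b then 1 else 0) * cnj (V o2 b))"
    using isometry_C by (intro sum.cong refl) simp
  also have "\<dots> = (\<Sum>a\<in>A. V o1 a * cnj (V o2 a))"
  proof (rule sum.cong[OF refl])
    fix a assume "a \<in> A"
    have "(\<Sum>b\<in>A. V o1 a * (if a = b then 1 else 0) * cnj (V o2 b)) = V o1 a * (\<Sum>b\<in>A. (if a = b then 1 else 0) * cnj (V o2 b))"
      by (simp add: sum_distrib_left mult.assoc)
    then show "(\<Sum>b\<in>A. V o1 a * (if a = b then 1 else 0) * cnj (V o2 b)) = V o1 a * cnj (V o2 a)"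
      using \<open>a \<in> A\<close> by (simp add: sum_indicator_mult(2)[OF finite_A])
  qed
  also have "\<dots> = range_proj o1 o2" unfolding range_proj_def ..
  finally show ?thesis .
qed

lemma range_proj_V: "a \<in> A \<Longrightarrow> (\<Sum>q\<in>C. cnj (V q a) * range_proj q r) = cnj (V r a)"
proof -
  assume a: "a \<in> A"
  have "(\<Sum>q\<in>C. cnj (V q a) * range_proj q r) = (\<Sum>b\<in>A. (\<Sum>q\<in>C. cnj (V q a) * V q b) * cnj (V r b))"
    unfolding range_proj_def sum_distrib_left sum_distrib_right by (subst sum.swap) (simp add: ac_simps)
  also have "\<dots> = (\<Sum>b\<in>A. (if a = b then 1 else 0) * cnj (V r b))" using isometry_C a by simp
  also have "\<dots> = cnj (V r a)" using a by (simp add: sum_indicator_mult(2)[OF finite_A])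
  finally show ?thesis .
qed

lemma unitary_ext_orthonormal_columns:
  assumes i1: "i1 \<in> In" and i2: "i2 \<in> In"
  shows "(\<Sum>q\<in>Out. cnj (unitary_ext q i1) * unitary_ext q i2) = (if i1 = i2 then 1 else 0)"
proof (cases "i1 \<in> A")
  case A1: True
  show ?thesis
  proof (cases "i2 \<in> A")
    case True
    have "(\<Sum>q\<in>Out. cnj (unitary_ext q i1) * unitary_ext q i2) = (\<Sum>q\<in>C. cnj (V q i1) * V q i2)"
      unfolding sum_Out unitary_ext_def using A1 True by (simp add: ren_A_notin_C)
    then show ?thesis using isometry_C A1 True by simp
  next
    case False
    have r2: "ren i2 \<in> C" using ren_notin_A[OF i2 False] .
    have "(\<Sum>q\<in>Out. cnj (unitary_ext q i1) * unitary_ext q i2) = (\<Sum>q\<in>C. cnj (V q i1) * ((if q = ren i2 then 1 else 0) - range_proj q (ren i2)))"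
      unfolding sum_Out unitary_ext_def using A1 False by (simp add: ren_A_notin_C)
    also have "\<dots> = cnj (V (ren i2) i1) - (\<Sum>q\<in>C. cnj (V q i1) * range_proj q (ren i2))"
      using r2 by (simp add: right_diff_distrib sum_subtractf sum_indicator_mult(3)[OF finite_C])
    also have "\<dots> = 0" using range_proj_V[OF A1] by simp
    finally show ?thesis using A1 False by auto
  qed
next
  case A1: False
  have r1: "ren i1 \<in> C" using ren_notin_A[OF i1 A1] .
  show ?thesis
  proof (cases "i2 \<in> A")
    case True
    have "(\<Sum>q\<in>Out. cnj (unitary_ext q i1) * unitary_ext q i2) = (\<Sum>q\<in>C. cnj ((if q = ren i1 then 1 else 0) - range_proj q (ren i1)) * V q i2)"
      unfolding sum_Out unitary_ext_def using A1 True by (simp add: ren_A_notin_C)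
    also have "\<dots> = (\<Sum>q\<in>C. (if q = ren i1 then 1 else 0) * V q i2) - (\<Sum>q\<in>C. range_proj (ren i1) q * V q i2)"
      unfolding sum_subtractf[symmetric] by (intro sum.cong refl) (simp add: range_proj_cnj left_diff_distrib)
    also have "(\<Sum>q\<in>C. (if q = ren i1 then 1 else 0) * V q i2) = V (ren i1) i2"
      using r1 by (simp add: sum_indicator_mult(1)[OF finite_C])
    also have "(\<Sum>q\<in>C. range_proj (ren i1) q * V q i2) = V (ren i1) i2"
    proof -
      have "cnj (\<Sum>q\<in>C. cnj (V q i2) * range_proj q (ren i1)) = cnj (cnj (V (ren i1) i2))" using range_proj_V[OF True] by simp
      then show ?thesis unfolding cnj_sum by (simp add: range_proj_cnj mult.commute)
    qed
    finally show ?thesis using A1 True by auto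
  next
    case A2: False
    have r2: "ren i2 \<in> C" using ren_notin_A[OF i2 A2] .
    have ivA: "(\<Sum>a\<in>A. V (ren i1) (ren_inv (ren a)) * cnj (V (ren i2) (ren_inv (ren a)))) = (\<Sum>a\<in>A. V (ren i1) a * cnj (V (ren i2) a))"
      by (rule sum.cong) (use ren_inv_ren A_subset in auto)
    have "(\<Sum>q\<in>Out. cnj (unitary_ext q i1) * unitary_ext q i2) =
       (\<Sum>q\<in>C. cnj ((if q = ren i1 then 1 else 0) - range_proj q (ren i1)) * ((if q = ren i2 then 1 else 0) - range_proj q (ren i2)))
       + (\<Sum>a\<in>A. V (ren i1) a * cnj (V (ren i2) a))"
      unfolding sum_Out unitary_ext_def using A1 A2 ivA by (simp add: ren_A_notin_C)
    also have "(\<Sum>a\<in>A. V (ren i1) a * cnj (V (ren i2) a)) = range_proj (ren i1) (ren i2)" by (simp add: range_proj_def)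
    also have "(\<Sum>q\<in>C. cnj ((if q = ren i1 then 1 else 0) - range_proj q (ren i1)) * ((if q = ren i2 then 1 else 0) - range_proj q (ren i2)))
       = (\<Sum>q\<in>C. (if q = ren i1 then 1 else 0) * (if q = ren i2 then 1 else 0)
            - (if q = ren i1 then 1 else 0) * range_proj q (ren i2) - range_proj (ren i1) q * (if q = ren i2 then 1 else 0)
            + range_proj (ren i1) q * range_proj q (ren i2))"
      by (intro sum.cong refl) (simp add: range_proj_cnj algebra_simps)
    also have "\<dots> = (if ren i1 = ren i2 then 1 else 0) - range_proj (ren i1) (ren i2) - range_proj (ren i1) (ren i2) + range_proj (ren i1) (ren i2)"
      using r1 r2 unfolding sum.distrib sum_subtractf range_proj_idem
      by (simp add: sum_indicator_mult(1,3)[OF finite_C])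
    finally have "(\<Sum>q\<in>Out. cnj (unitary_ext q i1) * unitary_ext q i2) = (if ren i1 = ren i2 then 1 else 0)" by simp
    moreover have "ren i1 = ren i2 \<longleftrightarrow> i1 = i2" using inj_ren i1 i2 by (auto simp: inj_on_def)
    ultimately show ?thesis by simp
  qed
qed

lemma unitary_ext_swap:
  assumes q: "q \<in> Out" and i: "i \<in> In"
  shows "unitary_ext q i = cnj (unitary_ext (ren i) (ren_inv q))"
proof (cases "i \<in> A")
  case True
  then show ?thesis
  proof (cases "q \<in> C")
    case True
    then show ?thesis using \<open>i \<in> A\<close> ren_inv_C[OF True] ren_ren_inv q ren_inv_ren i by (simp add: unitary_ext_def ren_A_notin_C)
  next
    case False
    then show ?thesis using \<open>i \<in> A\<close> ren_inv_notin_C[OF q False] by (simp add: unitary_ext_def ren_A_notin_C)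
  qed
next
  case nA: False
  have ri: "ren i \<in> C" using ren_notin_A[OF i nA] .
  show ?thesis
  proof (cases "q \<in> C")
    case True
    have "ren_inv q \<notin> A" using ren_inv_C[OF True] .
    then show ?thesis using nA True ri ren_ren_inv[OF q] by (auto simp: unitary_ext_def range_proj_cnj)
  next
    case False
    then show ?thesis using nA ri ren_inv_notin_C[OF q False] by (simp add: unitary_ext_def)
  qed
qed

lemma unitary_ext_orthonormal_rows:
  assumes o1: "o1 \<in> Out" and o2: "o2 \<in> Out"
  shows "(\<Sum>i\<in>In. unitary_ext o1 i * cnj (unitary_ext o2 i)) = (if o1 = o2 then 1 else 0)"
proof -
  have "(\<Sum>i\<in>In. unitary_ext o1 i * cnj (unitary_ext o2 i)) = (\<Sum>i\<in>In. cnj (unitary_ext (ren i) (ren_inv o1)) * unitary_ext (ren i) (ren_inv o2))"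
    using unitary_ext_swap o1 o2 by (intro sum.cong refl) simp
  also have "\<dots> = (\<Sum>q\<in>Out. cnj (unitary_ext q (ren_inv o1)) * unitary_ext q (ren_inv o2))"
    by (rule sum.reindex_bij_betw[OF bij, where g = "\<lambda>q. cnj (unitary_ext q (ren_inv o1)) * unitary_ext q (ren_inv o2)"])
  also have "\<dots> = (if ren_inv o1 = ren_inv o2 then 1 else 0)" by (rule unitary_ext_orthonormal_columns[OF ren_inv_in[OF o1] ren_inv_in[OF o2]])
  also have "(ren_inv o1 = ren_inv o2) = (o1 = o2)" using ren_ren_inv o1 o2 by metis
  finally show ?thesis .
qed

end

definition kraus_isometry :: "party \<Rightarrow> party \<Rightarrow> party \<Rightarrow> party \<Rightarrow> nat \<Rightarrow> nat \<Rightarrow> (nat \<Rightarrow> vec) \<Rightarrow> op" where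
  "kraus_isometry si ai so ao a n m q i =
     m (q ao div a) ((\<lambda>_. 0)(si := i si, ai := i ai - a * n, so := q so, ao := q ao mod a))"

text \<open>The Kraus operators stacked into one operator: the output ancilla value \<open>j + a k\<close> records
  the Kraus index \<open>k\<close> next to the ancilla value \<open>j\<close>, and the input ancilla is read with offset
  \<open>a n\<close>. Trace preservation makes it an isometry.\<close>
lemma kraus_isometry_orthonormal:
  fixes dd :: dims and m :: "nat \<Rightarrow> vec" and n :: nat and si ai so ao :: party
  defines "dd' \<equiv> dd(ai := dd ao * n + dd ai, ao := dd ao * n + dd ai)"
  assumes labels: "distinct [si, ai, so, ao]" and pos: "1 \<le> dd ao"
    and tp: "\<forall>x\<in>basis dd {si, ai}. \<forall>y\<in>basis dd {si, ai}.
       (\<Sum>q\<in>basis dd {so, ao}. \<Sum>k<n. m k (join {si, ai} x q) * cnj (m k (join {si, ai} y q))) = id_op x y"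
    and i1: "i1 \<in> basis dd' {si, ai}" "dd ao * n \<le> i1 ai" and i2: "i2 \<in> basis dd' {si, ai}" "dd ao * n \<le> i2 ai"
  shows "(\<Sum>q\<in>{q \<in> basis dd' {so, ao}. q ao < dd ao * n}.
      cnj (kraus_isometry si ai so ao (dd ao) n m q i1) * kraus_isometry si ai so ao (dd ao) n m q i2) =
    (if i1 = i2 then 1 else 0)"
proof -
  define a2 where "a2 = dd ao"
  define V where "V = kraus_isometry si ai so ao a2 n m"
  have [simp]: "si \<noteq> ai" "si \<noteq> so" "si \<noteq> ao" "ai \<noteq> so" "ai \<noteq> ao" "so \<noteq> ao"
    "ai \<noteq> si" "so \<noteq> si" "ao \<noteq> si" "so \<noteq> ai" "ao \<noteq> ai" "ao \<noteq> so"
    using labels by auto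
  define unshift where "unshift i = (\<lambda>_. 0 :: nat)(si := i si, ai := i ai - a2 * n)" for i :: bidx
  have unshift_in: "unshift i \<in> basis dd {si, ai}" if "i \<in> basis dd' {si, ai}" "a2 * n \<le> i ai" for i
  proof -
    have "i l < dd' l" if "l \<in> {si, ai}" for l using \<open>i \<in> basis dd' {si, ai}\<close> that unfolding basis_def by blast
    from this[of si] this[of ai] show ?thesis using that(2) by (auto simp: unshift_def basis_def dd'_def a2_def)
  qed
  have unshift_inj: "unshift i1 = unshift i2 \<longleftrightarrow> i1 = i2"
  proof
    assume eq: "unshift i1 = unshift i2"
    have "i1 si = i2 si" "i1 ai - a2 * n = i2 ai - a2 * n"
      using fun_cong[OF eq, of si] fun_cong[OF eq, of ai] by (simp_all add: unshift_def)
    then have "i1 l = i2 l" for l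
      using i1 i2 by (cases "l = si \<or> l = ai") (auto simp: basis_def a2_def)
    then show "i1 = i2" by blast
  qed simp
  have "(\<Sum>q\<in>{q \<in> basis dd' {so, ao}. q ao < a2 * n}. cnj (V q i1) * V q i2) =
      (\<Sum>q\<in>basis dd' {so, ao}. if q ao < a2 * n then cnj (V q i1) * V q i2 else 0)"
    by (simp add: sum.inter_filter)
  also have "\<dots> = (\<Sum>q\<in>basis dd {so}. \<Sum>j<a2 * n + dd ai. if j < a2 * n then cnj (V (q(ao := j)) i1) * V (q(ao := j)) i2 else 0)"
    using basis_cong[of "{so}" dd' dd] by (simp add: sum_basis_pair dd'_def a2_def)
  also have "\<dots> = (\<Sum>q\<in>basis dd {so}. \<Sum>k<n. \<Sum>j<a2. cnj (V (q(ao := j + a2 * k)) i1) * V (q(ao := j + a2 * k)) i2)"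
    by (rule sum.cong[OF refl]) (simp add: sum_lessThan_if_less sum_lessThan_mult)
  also have "\<dots> = (\<Sum>q\<in>basis dd {so}. \<Sum>j<a2. \<Sum>k<n. cnj (m k (join {si, ai} (unshift i1) (q(ao := j)))) * m k (join {si, ai} (unshift i2) (q(ao := j))))"
  proof (rule sum.cong[OF refl])
    fix q assume q: "q \<in> basis dd {so}"
    have "V (q(ao := j + a2 * k)) i = m k (join {si, ai} (unshift i) (q(ao := j)))" if "j < a2" for i j k
    proof -
      have "(j + a2 * k) div a2 = k" "(j + a2 * k) mod a2 = j" using that by auto
      moreover have "(\<lambda>_. 0)(si := i si, ai := i ai - a2 * n, so := q so, ao := j) = join {si, ai} (unshift i) (q(ao := j))"
        using q by (auto simp: fun_eq_iff join_def unshift_def basis_def)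
      ultimately show ?thesis unfolding V_def kraus_isometry_def by simp
    qed
    then show "(\<Sum>k<n. \<Sum>j<a2. cnj (V (q(ao := j + a2 * k)) i1) * V (q(ao := j + a2 * k)) i2) =
        (\<Sum>j<a2. \<Sum>k<n. cnj (m k (join {si, ai} (unshift i1) (q(ao := j)))) * m k (join {si, ai} (unshift i2) (q(ao := j))))"
      by (subst sum.swap) (intro sum.cong refl, simp)
  qed
  also have "\<dots> = cnj (\<Sum>q\<in>basis dd {so, ao}. \<Sum>k<n. m k (join {si, ai} (unshift i1) q) * cnj (m k (join {si, ai} (unshift i2) q)))"
    unfolding sum_basis_pair[OF \<open>so \<noteq> ao\<close>] cnj_sum a2_def by (simp add: mult.commute)
  also have "\<dots> = (if i1 = i2 then 1 else 0)"
    using tp unshift_in[OF i1[folded a2_def]] unshift_in[OF i2[folded a2_def]] unshift_inj by (simp add: id_op_def)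
  finally show ?thesis unfolding V_def a2_def .
qed

lemma kraus_unitary_dilation:
  fixes dd :: dims and m :: "nat \<Rightarrow> vec" and n :: nat and si ai so ao :: party
  assumes labels: "distinct [si, ai, so, ao]" and dA: "dd si = dd so" and pos: "1 \<le> dd ao"
    and tp: "\<forall>x\<in>basis dd {si, ai}. \<forall>y\<in>basis dd {si, ai}.
       (\<Sum>q\<in>basis dd {so, ao}. \<Sum>k<n. m k (join {si, ai} x q) * cnj (m k (join {si, ai} y q))) = id_op x y"
  obtains U where "is_unitary (dd(ai := dd ao * n + dd ai, ao := dd ao * n + dd ai)) {si, ai} {so, ao} U"
    and "\<And>x y \<alpha> j. x < dd si \<Longrightarrow> y < dd so \<Longrightarrow> \<alpha> < dd ai \<Longrightarrow>
      U ((\<lambda>_. 0)(so := y, ao := j)) ((\<lambda>_. 0)(si := x, ai := \<alpha> + dd ao * n)) =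
      (if j < dd ao * n then m (j div dd ao) ((\<lambda>_. 0)(si := x, ai := \<alpha>, so := y, ao := j mod dd ao)) else 0)"
proof -
  define a1 a2 where "a1 = dd ai" and "a2 = dd ao"
  then have da1: "dd ai = a1" and da2: "dd ao = a2" by simp_all
  note pos = pos[folded a2_def]
  have [simp]: "si \<noteq> ai" "si \<noteq> so" "si \<noteq> ao" "ai \<noteq> so" "ai \<noteq> ao" "so \<noteq> ao"
    "ai \<noteq> si" "so \<noteq> si" "ao \<noteq> si" "so \<noteq> ai" "ao \<noteq> ai" "ao \<noteq> so"
    using labels by auto
  define c where "c = a2 * n + a1"
  define dd' where "dd' = dd(ai := c, ao := c)"
  define In where "In = basis dd' {si, ai}"
  define Out where "Out = basis dd' {so, ao}"
  define ren where "ren i = (\<lambda>_. 0 :: nat)(so := i si, ao := i ai)" for i :: bidx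
  define A where "A = {i \<in> In. a2 * n \<le> i ai}"
  define V where "V = kraus_isometry si ai so ao a2 n m"
  have bij: "bij_betw ren In Out"
  proof (rule bij_betwI[where g = "\<lambda>q. (\<lambda>_. 0 :: nat)(si := q so, ai := q ao)"])
    show "ren \<in> In \<rightarrow> Out" using dA by (auto simp: In_def Out_def ren_def basis_def dd'_def)
    show "(\<lambda>q. (\<lambda>_. 0 :: nat)(si := q so, ai := q ao)) \<in> Out \<rightarrow> In" using dA by (auto simp: In_def Out_def basis_def dd'_def)
    show "(\<lambda>_. 0)(si := ren x so, ai := ren x ao) = x" if "x \<in> In" for x
      using that by (auto simp: In_def ren_def basis_def fun_eq_iff)
    show "ren ((\<lambda>_. 0)(si := y so, ai := y ao)) = y" if "y \<in> Out" for y
      using that by (auto simp: Out_def ren_def basis_def fun_eq_iff)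
  qed
  have C_eq: "Out - ren ` A = {q \<in> Out. q ao < a2 * n}"
  proof (intro set_eqI iffI)
    fix q assume q: "q \<in> Out - ren ` A"
    show "q \<in> {q \<in> Out. q ao < a2 * n}"
    proof (rule ccontr)
      assume "q \<notin> {q \<in> Out. q ao < a2 * n}"
      then have ge: "a2 * n \<le> q ao" using q by auto
      have "(\<lambda>_. 0 :: nat)(si := q so, ai := q ao) \<in> A"
        using q ge dA by (auto simp: A_def In_def Out_def basis_def dd'_def)
      moreover have "ren ((\<lambda>_. 0 :: nat)(si := q so, ai := q ao)) = q"
        using q by (auto simp: Out_def ren_def basis_def fun_eq_iff)
      ultimately show False using q by force
    qed
  next
    fix q assume "q \<in> {q \<in> Out. q ao < a2 * n}"
    then show "q \<in> Out - ren ` A" by (auto simp: A_def ren_def)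
  qed
  have isometry: "\<forall>i1\<in>A. \<forall>i2\<in>A. (\<Sum>q\<in>Out - ren ` A. cnj (V q i1) * V q i2) = (if i1 = i2 then 1 else 0)"
    using kraus_isometry_orthonormal[OF labels pos[unfolded a2_def] tp]
    unfolding C_eq unfolding V_def A_def In_def Out_def dd'_def c_def a1_def a2_def by auto
  interpret h: isometry_extension In Out ren A V
  proof (unfold_locales)
    show "finite In" by (simp add: In_def)
    show "finite Out" by (simp add: Out_def)
    show "bij_betw ren In Out" by (rule bij)
    show "A \<subseteq> In" by (auto simp: A_def)
    show "\<forall>a1\<in>A. \<forall>a2\<in>A. (\<Sum>q\<in>Out - ren ` A. cnj (V q a1) * V q a2) = (if a1 = a2 then 1 else 0)" by (rule isometry)
  qed
  define U where "U = h.unitary_ext"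
  have unit: "is_unitary dd' {si, ai} {so, ao} U"
    unfolding is_unitary_def id_op_def U_def using h.unitary_ext_orthonormal_columns h.unitary_ext_orthonormal_rows by (simp add: In_def Out_def)
  have key: "U ((\<lambda>_. 0)(so := y, ao := \<beta> + a2 * k)) ((\<lambda>_. 0)(si := x, ai := \<alpha> + a2 * n)) =
        m k ((\<lambda>_. 0)(si := x, ai := \<alpha>, so := y, ao := \<beta>))"
    if "x < dd si" "y < dd so" "\<alpha> < a1" "\<beta> < a2" "k < n" for x y \<alpha> \<beta> k
  proof -
    have kn: "a2 * k + a2 \<le> a2 * n" using \<open>k < n\<close> by (metis Suc_leI mult_Suc_right mult_le_mono2 add.commute)
    have iA: "(\<lambda>_. 0)(si := x, ai := \<alpha> + a2 * n) \<in> A"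
      using that da1 by (auto simp: A_def In_def basis_def dd'_def c_def)
    have qB: "(\<lambda>_. 0)(so := y, ao := \<beta> + a2 * k) \<in> h.C"
      unfolding h.C_def C_eq using that kn dA by (auto simp: Out_def basis_def dd'_def c_def)
    have "(\<beta> + a2 * k) div a2 = k" "(\<beta> + a2 * k) mod a2 = \<beta>" using that by auto
    then show ?thesis unfolding U_def h.unitary_ext_def using iA qB by (simp add: V_def kraus_isometry_def)
  qed
  have zero: "U ((\<lambda>_. 0)(so := y, ao := j)) ((\<lambda>_. 0)(si := x, ai := \<alpha> + a2 * n)) = 0"
    if "x < dd si" "\<alpha> < a1" "a2 * n \<le> j" for x y \<alpha> j
  proof -
    have iA: "(\<lambda>_. 0)(si := x, ai := \<alpha> + a2 * n) \<in> A"
      using that da1 by (auto simp: A_def In_def basis_def dd'_def c_def)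
    have qB: "(\<lambda>_. 0)(so := y, ao := j) \<notin> h.C"
      unfolding h.C_def C_eq using that by auto
    show ?thesis unfolding U_def h.unitary_ext_def using iA qB by simp
  qed
  show ?thesis
  proof (rule that)
    show "is_unitary (dd(ai := dd ao * n + dd ai, ao := dd ao * n + dd ai)) {si, ai} {so, ao} U"
      using unit unfolding dd'_def c_def a1_def a2_def .
    fix x y \<alpha> j assume xy: "x < dd si" "y < dd so" "\<alpha> < dd ai"
    show "U ((\<lambda>_. 0)(so := y, ao := j)) ((\<lambda>_. 0)(si := x, ai := \<alpha> + dd ao * n)) =
      (if j < dd ao * n then m (j div dd ao) ((\<lambda>_. 0)(si := x, ai := \<alpha>, so := y, ao := j mod dd ao)) else 0)"
    proof (cases "j < dd ao * n")
      case True
      then have "j div a2 < n" using da2 by (simp add: less_mult_imp_div_less mult.commute)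
      moreover have "j mod a2 < a2" using pos by simp
      ultimately show ?thesis using key[OF xy[unfolded da1], of "j mod a2" "j div a2"] True da2 by simp
    qed (use zero xy[unfolded da1] da2 in simp)
  qed
qed

section \<open>Pure processes are valid\<close>

lemma link_vec_dilation:
  fixes D :: dims and nA nB :: nat
  defines "ex \<equiv> \<lambda>x. x(AI' := x AI' + D AO' * nA, BI' := x BI' + D BO' * nB)"
  assumes UA: "\<And>x y \<alpha> j. x < D AI \<Longrightarrow> y < D AO \<Longrightarrow> \<alpha> < D AI' \<Longrightarrow>
      UA ((\<lambda>_. 0)(AO := y, AO' := j)) ((\<lambda>_. 0)(AI := x, AI' := \<alpha> + D AO' * nA)) =
      (if j < D AO' * nA then mA (j div D AO') ((\<lambda>_. 0)(AI := x, AI' := \<alpha>, AO := y, AO' := j mod D AO')) else 0)"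
    and UB: "\<And>x y \<alpha> j. x < D BI \<Longrightarrow> y < D BO \<Longrightarrow> \<alpha> < D BI' \<Longrightarrow>
      UB ((\<lambda>_. 0)(BO := y, BO' := j)) ((\<lambda>_. 0)(BI := x, BI' := \<alpha> + D BO' * nB)) =
      (if j < D BO' * nB then mB (j div D BO') ((\<lambda>_. 0)(BI := x, BI' := \<alpha>, BO := y, BO' := j mod D BO')) else 0)"
    and x: "x \<in> basis D {P, AI', BI'}" and D': "\<forall>l\<in>slots. D' l = D l"
  shows "link_vec D' u (dket {AI, AI'} {AO, AO'} UA) (dket {BI, BI'} {BO, BO'} UB)
      (join {P, AI', BI'} (ex x) (q(AO' := j, BO' := j'))) =
    (if j < D AO' * nA \<and> j' < D BO' * nB
     then link_vec D u (mA (j div D AO')) (mB (j' div D BO'))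
       (join {P, AI', BI'} x (q(AO' := j mod D AO', BO' := j' mod D BO')))
     else 0)"
proof -
  define p where "p = join {P, AI', BI'} (ex x) (q(AO' := j, BO' := j'))"
  define p' where "p' = join {P, AI', BI'} x (q(AO' := j mod D AO', BO' := j' mod D BO'))"
  have xlt: "x AI' < D AI'" "x BI' < D BI'" using x by (auto simp: basis_def)
  have per: "w (restr mainS (join slots z p)) * dket {AI, AI'} {AO, AO'} UA (restr alice_sys (join slots z p)) *
      dket {BI, BI'} {BO, BO'} UB (restr bob_sys (join slots z p)) =
    (if j < D AO' * nA \<and> j' < D BO' * nB then w (restr mainS (join slots z p')) *
      mA (j div D AO') (restr alice_sys (join slots z p')) * mB (j' div D BO') (restr bob_sys (join slots z p'))
     else 0)" if z: "z \<in> basis D slots" for w z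
  proof -
    have zlt: "z AI < D AI" "z AO < D AO" "z BI < D BI" "z BO < D BO" using z by (auto simp: basis_def)
    have "restr mainS (join slots z p) = restr mainS (join slots z p')"
      by (simp add: party_fun_eq_iff p_def p'_def restr_def join_def mainS_def ex_def)
    moreover have "restr {AO, AO'} (restr alice_sys (join slots z p)) = (\<lambda>_. 0)(AO := z AO, AO' := j)"
      "restr {AI, AI'} (restr alice_sys (join slots z p)) = (\<lambda>_. 0)(AI := z AI, AI' := x AI' + D AO' * nA)"
      "restr alice_sys (join slots z p') = (\<lambda>_. 0)(AI := z AI, AI' := x AI', AO := z AO, AO' := j mod D AO')"
      "restr {BO, BO'} (restr bob_sys (join slots z p)) = (\<lambda>_. 0)(BO := z BO, BO' := j')"
      "restr {BI, BI'} (restr bob_sys (join slots z p)) = (\<lambda>_. 0)(BI := z BI, BI' := x BI' + D BO' * nB)"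
      "restr bob_sys (join slots z p') = (\<lambda>_. 0)(BI := z BI, BI' := x BI', BO := z BO, BO' := j' mod D BO')"
      by (simp_all add: party_fun_eq_iff p_def p'_def restr_def join_def ex_def)
    ultimately show ?thesis unfolding dket_def using UA UB zlt xlt by simp
  qed
  have bD: "basis D' slots = basis D slots" using D' by (intro basis_cong) auto
  have "link_vec D' u (dket {AI, AI'} {AO, AO'} UA) (dket {BI, BI'} {BO, BO'} UB) p =
    (\<Sum>z\<in>basis D slots. if j < D AO' * nA \<and> j' < D BO' * nB then u (restr mainS (join slots z p')) *
      mA (j div D AO') (restr alice_sys (join slots z p')) * mB (j' div D BO') (restr bob_sys (join slots z p'))
     else 0)"
    unfolding link_vec_def bD by (rule sum.cong[OF refl]) (rule per)
  then show ?thesis unfolding p_def p'_def link_vec_def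
    by (cases "j < D AO' * nA \<and> j' < D BO' * nB") auto
qed

lemma sum_basis_out_ancillas:
  "(\<Sum>q\<in>basis e {F, AO', BO'}. f q) = (\<Sum>q\<in>basis e {F}. \<Sum>j<e AO'. \<Sum>j'<e BO'. f (q(AO' := j, BO' := j')))"
proof -
  have "(\<Sum>q\<in>basis e {F, AO', BO'}. f q) = (\<Sum>q\<in>basis e {F, BO'}. \<Sum>j<e AO'. f (q(AO' := j)))"
    using sum_basis_fun_upd[where L = AO' and S = "{F, AO', BO'}" and d = e] by (simp add: insert_Diff_if insert_commute)
  also have "\<dots> = (\<Sum>q\<in>basis e {F}. \<Sum>j'<e BO'. \<Sum>j<e AO'. f (q(BO' := j', AO' := j)))"
    using sum_basis_fun_upd[where L = BO' and S = "{F, BO'}" and d = e] by (simp add: insert_Diff_if)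
  also have "\<dots> = (\<Sum>q\<in>basis e {F}. \<Sum>j<e AO'. \<Sum>j'<e BO'. f (q(AO' := j, BO' := j')))"
    by (rule sum.cong[OF refl], subst sum.swap) (simp add: fun_upd_twist)
  finally show ?thesis .
qed

lemma dilated_link_vec:
  fixes d :: dims and a1 a2 b1 b2 nA nB :: nat
  defines "D \<equiv> anc_dims d a1 a2 b1 b2"
    and "Dc \<equiv> anc_dims d (a2 * nA + a1) (a2 * nA + a1) (b2 * nB + b1) (b2 * nB + b1)"
  assumes dims: "d AI = d AO" "d BI = d BO" "d P = d F"
    and pos: "1 \<le> d P" "1 \<le> a1" "1 \<le> a2" "1 \<le> b1" "1 \<le> b2"
    and pure: "is_pure d (proj u)"
    and tpA: "\<forall>x\<in>basis D {AI, AI'}. \<forall>y\<in>basis D {AI, AI'}.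
       (\<Sum>q\<in>basis D {AO, AO'}. \<Sum>k<nA. mA k (join {AI, AI'} x q) * cnj (mA k (join {AI, AI'} y q))) = id_op x y"
    and tpB: "\<forall>x\<in>basis D {BI, BI'}. \<forall>y\<in>basis D {BI, BI'}.
       (\<Sum>q\<in>basis D {BO, BO'}. \<Sum>l<nB. mB l (join {BI, BI'} x q) * cnj (mB l (join {BI, BI'} y q))) = id_op x y"
  obtains V where
    "\<And>x y. x \<in> basis Dc {P, AI', BI'} \<Longrightarrow> y \<in> basis Dc {P, AI', BI'} \<Longrightarrow>
      (\<Sum>q\<in>basis Dc {F, AO', BO'}. V (join {P, AI', BI'} x q) * cnj (V (join {P, AI', BI'} y q))) = id_op x y"
    and "\<And>z q j j'. z \<in> basis D {P, AI', BI'} \<Longrightarrow>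
      V (join {P, AI', BI'} (z(AI' := z AI' + a2 * nA, BI' := z BI' + b2 * nB)) (q(AO' := j, BO' := j'))) =
      (if j < a2 * nA \<and> j' < b2 * nB then link_vec D u (mA (j div a2)) (mB (j' div b2))
         (join {P, AI', BI'} z (q(AO' := j mod a2, BO' := j' mod b2))) else 0)"
proof -
  have D: "D AI = D AO" "D BI = D BO" "D AI' = a1" "D AO' = a2" "D BI' = b1" "D BO' = b2"
    using dims by (simp_all add: D_def anc_dims_def)
  obtain UA where UA: "is_unitary (D(AI' := D AO' * nA + D AI', AO' := D AO' * nA + D AI')) {AI, AI'} {AO, AO'} UA"
    and UA_val: "\<And>x y \<alpha> j. x < D AI \<Longrightarrow> y < D AO \<Longrightarrow> \<alpha> < D AI' \<Longrightarrow>
      UA ((\<lambda>_. 0)(AO := y, AO' := j)) ((\<lambda>_. 0)(AI := x, AI' := \<alpha> + D AO' * nA)) =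
      (if j < D AO' * nA then mA (j div D AO') ((\<lambda>_. 0)(AI := x, AI' := \<alpha>, AO := y, AO' := j mod D AO')) else 0)"
  proof (rule kraus_unitary_dilation[where si = AI and ai = AI' and so = AO and ao = AO' and dd = D and m = mA and n = nA])
  qed (use D pos tpA that in auto)
  obtain UB where UB: "is_unitary (D(BI' := D BO' * nB + D BI', BO' := D BO' * nB + D BI')) {BI, BI'} {BO, BO'} UB"
    and UB_val: "\<And>x y \<alpha> j. x < D BI \<Longrightarrow> y < D BO \<Longrightarrow> \<alpha> < D BI' \<Longrightarrow>
      UB ((\<lambda>_. 0)(BO := y, BO' := j)) ((\<lambda>_. 0)(BI := x, BI' := \<alpha> + D BO' * nB)) =
      (if j < D BO' * nB then mB (j div D BO') ((\<lambda>_. 0)(BI := x, BI' := \<alpha>, BO := y, BO' := j mod D BO')) else 0)"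
  proof (rule kraus_unitary_dilation[where si = BI and ai = BI' and so = BO and ao = BO' and dd = D and m = mB and n = nB])
  qed (use D pos tpB that in auto)
  have eA: "basis Dc S = basis (D(AI' := D AO' * nA + D AI', AO' := D AO' * nA + D AI')) S"
    if "S \<subseteq> alice_sys" for S
    using that by (intro basis_cong) (auto simp: Dc_def D_def anc_dims_def)
  have eB: "basis Dc S = basis (D(BI' := D BO' * nB + D BI', BO' := D BO' * nB + D BI')) S"
    if "S \<subseteq> bob_sys" for S
    using that by (intro basis_cong) (auto simp: Dc_def D_def anc_dims_def)
  have "is_unitary Dc {AI, AI'} {AO, AO'} UA" "is_unitary Dc {BI, BI'} {BO, BO'} UB"
    using is_unitary_cong[OF eA eA, of "{AI, AI'}" "{AO, AO'}"] is_unitary_cong[OF eB eB, of "{BI, BI'}" "{BO, BO'}"]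
      UA UB by auto
  then obtain X where X: "is_unitary Dc {P, AI', BI'} {F, AO', BO'} X"
    and vX: "\<forall>s\<in>basis Dc link_sys. link_vec Dc u (dket {AI, AI'} {AO, AO'} UA) (dket {BI, BI'} {BO, BO'} UB) s =
      dket {P, AI', BI'} {F, AO', BO'} X s"
    using link_vec_unitary[of d u "a2 * nA + a1" "a2 * nA + a1" "b2 * nB + b1" "b2 * nB + b1" UA UB, folded Dc_def]
      pure pos dims by auto
  show ?thesis
  proof (rule that)
    fix x y assume x: "x \<in> basis Dc {P, AI', BI'}" and y: "y \<in> basis Dc {P, AI', BI'}"
    show "(\<Sum>q\<in>basis Dc {F, AO', BO'}.
        link_vec Dc u (dket {AI, AI'} {AO, AO'} UA) (dket {BI, BI'} {BO, BO'} UB) (join {P, AI', BI'} x q) *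
        cnj (link_vec Dc u (dket {AI, AI'} {AO, AO'} UA) (dket {BI, BI'} {BO, BO'} UB) (join {P, AI', BI'} y q))) =
      id_op x y"
      using unitary_dket_partial_trace[OF X _ x y] vX
        join_in_basis[OF x, of _ "{F, AO', BO'}"] join_in_basis[OF y, of _ "{F, AO', BO'}"]
      unfolding basis_link_sys[symmetric] by (simp cong: sum.cong)
  next
    fix z q j j' assume z: "z \<in> basis D {P, AI', BI'}"
    have "\<forall>l\<in>slots. Dc l = D l" by (simp add: Dc_def D_def anc_dims_def)
    from link_vec_dilation[OF UA_val UB_val z this, where u = u and q = q and j = j and j' = j']
    show "link_vec Dc u (dket {AI, AI'} {AO, AO'} UA) (dket {BI, BI'} {BO, BO'} UB)
        (join {P, AI', BI'} (z(AI' := z AI' + a2 * nA, BI' := z BI' + b2 * nB)) (q(AO' := j, BO' := j'))) =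
      (if j < a2 * nA \<and> j' < b2 * nB then link_vec D u (mA (j div a2)) (mB (j' div b2))
         (join {P, AI', BI'} z (q(AO' := j mod a2, BO' := j' mod b2))) else 0)"
      unfolding D .
  qed
qed

lemma link_kraus_tp:
  fixes d :: dims and a1 a2 b1 b2 nA nB :: nat
  defines "D \<equiv> anc_dims d a1 a2 b1 b2"
  assumes dims: "d AI = d AO" "d BI = d BO" "d P = d F"
    and pos: "1 \<le> d P" "1 \<le> a1" "1 \<le> a2" "1 \<le> b1" "1 \<le> b2"
    and pure: "is_pure d (proj u)"
    and tpA: "\<forall>x\<in>basis D {AI, AI'}. \<forall>y\<in>basis D {AI, AI'}.
       (\<Sum>q\<in>basis D {AO, AO'}. \<Sum>k<nA. mA k (join {AI, AI'} x q) * cnj (mA k (join {AI, AI'} y q))) = id_op x y"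
    and tpB: "\<forall>x\<in>basis D {BI, BI'}. \<forall>y\<in>basis D {BI, BI'}.
       (\<Sum>q\<in>basis D {BO, BO'}. \<Sum>l<nB. mB l (join {BI, BI'} x q) * cnj (mB l (join {BI, BI'} y q))) = id_op x y"
    and x: "x \<in> basis D {P, AI', BI'}" and y: "y \<in> basis D {P, AI', BI'}"
  shows "(\<Sum>s\<in>basis D {F, AO', BO'}. \<Sum>k<nA. \<Sum>l<nB. link_vec D u (mA k) (mB l) (join {P, AI', BI'} x s) *
      cnj (link_vec D u (mA k) (mB l) (join {P, AI', BI'} y s))) = id_op x y"
proof -
  define cA cB where "cA = a2 * nA + a1" and "cB = b2 * nB + b1"
  define Dc where "Dc = anc_dims d cA cA cB cB"
  define ex where "ex z = z(AI' := z AI' + a2 * nA, BI' := z BI' + b2 * nB)" for z :: bidx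
  define L where "L z q j j' = link_vec D u (mA (j div a2)) (mB (j' div b2))
    (join {P, AI', BI'} z (q(AO' := j mod a2, BO' := j' mod b2)))" for z q j j'
  obtain V where V_tp: "\<And>x y. x \<in> basis Dc {P, AI', BI'} \<Longrightarrow> y \<in> basis Dc {P, AI', BI'} \<Longrightarrow>
      (\<Sum>q\<in>basis Dc {F, AO', BO'}. V (join {P, AI', BI'} x q) * cnj (V (join {P, AI', BI'} y q))) = id_op x y"
    and V_ex: "\<And>z q j j'. z \<in> basis D {P, AI', BI'} \<Longrightarrow>
      V (join {P, AI', BI'} (ex z) (q(AO' := j, BO' := j'))) = (if j < a2 * nA \<and> j' < b2 * nB then L z q j j' else 0)"
    using dilated_link_vec[OF dims pos pure tpA[unfolded D_def] tpB[unfolded D_def], folded D_def]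
    unfolding Dc_def cA_def cB_def ex_def L_def by blast
  have D: "D AO' = a2" "D BO' = b2" by (simp_all add: D_def anc_dims_def)
  have ex_in: "ex z \<in> basis Dc {P, AI', BI'}" if "z \<in> basis D {P, AI', BI'}" for z
  proof -
    have "z P < d P" "z AI' < a1" "z BI' < b1" "\<And>l. l \<notin> {P, AI', BI'} \<Longrightarrow> z l = 0"
      using that by (auto simp: basis_def D_def anc_dims_def)
    then show ?thesis
      unfolding basis_def ex_def by (auto simp: Dc_def anc_dims_def cA_def cB_def)
  qed
  have "x = y" if "ex x = ex y"
  proof -
    have "x l = y l" for l
      using fun_cong[OF that, of l] by (cases "l = AI'"; cases "l = BI'") (simp_all add: ex_def)
    then show ?thesis by blast
  qed
  then have "id_op x y = id_op (ex x) (ex y)" by (auto simp: id_op_def)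
  also have "\<dots> = (\<Sum>q\<in>basis Dc {F, AO', BO'}. V (join {P, AI', BI'} (ex x) q) * cnj (V (join {P, AI', BI'} (ex y) q)))"
    by (rule V_tp[OF ex_in[OF x] ex_in[OF y], symmetric])
  also have "\<dots> = (\<Sum>q\<in>basis D {F}. \<Sum>j<cA. \<Sum>j'<cB. if j < a2 * nA \<and> j' < b2 * nB
      then L x q j j' * cnj (L y q j j') else 0)"
  proof -
    have "basis Dc {F} = basis D {F}" by (rule basis_cong) (simp add: Dc_def D_def anc_dims_def)
    moreover have "Dc AO' = cA" "Dc BO' = cB" by (simp_all add: Dc_def anc_dims_def)
    ultimately show ?thesis unfolding sum_basis_out_ancillas V_ex[OF x] V_ex[OF y]
      by (intro sum.cong refl) simp_all
  qed
  also have "\<dots> = (\<Sum>q\<in>basis D {F}. \<Sum>k<nA. \<Sum>\<beta><a2. \<Sum>l<nB. \<Sum>\<beta>'<b2.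
      L x q (\<beta> + a2 * k) (\<beta>' + b2 * l) * cnj (L y q (\<beta> + a2 * k) (\<beta>' + b2 * l)))"
    by (simp add: sum_lessThan_if_conj cA_def cB_def sum_lessThan_mult)
  also have "\<dots> = (\<Sum>q\<in>basis D {F}. \<Sum>\<beta><a2. \<Sum>\<beta>'<b2. \<Sum>k<nA. \<Sum>l<nB.
      link_vec D u (mA k) (mB l) (join {P, AI', BI'} x (q(AO' := \<beta>, BO' := \<beta>'))) *
      cnj (link_vec D u (mA k) (mB l) (join {P, AI', BI'} y (q(AO' := \<beta>, BO' := \<beta>')))))"
  proof (rule sum.cong[OF refl])
    fix q
    define G where "G k l \<beta> \<beta>' = link_vec D u (mA k) (mB l) (join {P, AI', BI'} x (q(AO' := \<beta>, BO' := \<beta>'))) *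
      cnj (link_vec D u (mA k) (mB l) (join {P, AI', BI'} y (q(AO' := \<beta>, BO' := \<beta>'))))" for k l \<beta> \<beta>'
    have "(\<Sum>k<nA. \<Sum>\<beta><a2. \<Sum>l<nB. \<Sum>\<beta>'<b2.
        L x q (\<beta> + a2 * k) (\<beta>' + b2 * l) * cnj (L y q (\<beta> + a2 * k) (\<beta>' + b2 * l))) =
      (\<Sum>k<nA. \<Sum>\<beta><a2. \<Sum>l<nB. \<Sum>\<beta>'<b2. G k l \<beta> \<beta>')"
      by (intro sum.cong refl) (simp add: L_def G_def)
    also have "\<dots> = (\<Sum>k<nA. \<Sum>l<nB. \<Sum>\<beta><a2. \<Sum>\<beta>'<b2. G k l \<beta> \<beta>')"
      by (rule sum.cong[OF refl]) (rule sum.swap)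
    also have "\<dots> = (\<Sum>\<beta><a2. \<Sum>\<beta>'<b2. \<Sum>k<nA. \<Sum>l<nB. G k l \<beta> \<beta>')"
      by (rule sum_swap_inner_outer)
    finally show "(\<Sum>k<nA. \<Sum>\<beta><a2. \<Sum>l<nB. \<Sum>\<beta>'<b2.
        L x q (\<beta> + a2 * k) (\<beta>' + b2 * l) * cnj (L y q (\<beta> + a2 * k) (\<beta>' + b2 * l))) =
      (\<Sum>\<beta><a2. \<Sum>\<beta>'<b2. \<Sum>k<nA. \<Sum>l<nB.
        link_vec D u (mA k) (mB l) (join {P, AI', BI'} x (q(AO' := \<beta>, BO' := \<beta>'))) *
        cnj (link_vec D u (mA k) (mB l) (join {P, AI', BI'} y (q(AO' := \<beta>, BO' := \<beta>')))))"
      unfolding G_def .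
  qed
  also have "\<dots> = (\<Sum>s\<in>basis D {F, AO', BO'}. \<Sum>k<nA. \<Sum>l<nB. link_vec D u (mA k) (mB l) (join {P, AI', BI'} x s) *
      cnj (link_vec D u (mA k) (mB l) (join {P, AI', BI'} y s)))"
    by (simp only: sum_basis_out_ancillas D)
  finally show ?thesis by simp
qed

lemma is_process_of_pure:
  assumes dpos: "\<forall>l\<in>mainS. 1 \<le> d l" and dims: "d AI = d AO" "d BI = d BO" "d P = d F"
    and pure: "is_pure d (proj u)"
  shows "is_process_matrix d (proj u)"
  unfolding is_process_matrix_def
proof (intro allI impI)
  fix a1 a2 b1 b2 :: nat and \<Phi>x \<Phi>y
  assume pos: "1 \<le> a1 \<and> 1 \<le> a2 \<and> 1 \<le> b1 \<and> 1 \<le> b2"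
  assume cptp: "is_cptp (anc_dims d a1 a2 b1 b2) {AI, AI'} {AO, AO'} \<Phi>x \<and>
    is_cptp (anc_dims d a1 a2 b1 b2) {BI, BI'} {BO, BO'} \<Phi>y"
  define D where "D = anc_dims d a1 a2 b1 b2"
  have alice: "{AI, AI'} \<union> {AO, AO'} = alice_sys" and bob: "{BI, BI'} \<union> {BO, BO'} = bob_sys" by auto
  obtain nA :: nat and mA where
    decA: "\<forall>a\<in>basis D ({AI, AI'} \<union> {AO, AO'}). \<forall>b\<in>basis D ({AI, AI'} \<union> {AO, AO'}).
      choi {AI, AI'} {AO, AO'} \<Phi>x a b = (\<Sum>k<nA. mA k a * cnj (mA k b))"
    and tpA: "\<forall>x\<in>basis D {AI, AI'}. \<forall>y\<in>basis D {AI, AI'}.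
      (\<Sum>q\<in>basis D {AO, AO'}. \<Sum>k<nA. mA k (join {AI, AI'} x q) * cnj (mA k (join {AI, AI'} y q))) = id_op x y"
    by (rule cptp_kraus[of D "{AI, AI'}" "{AO, AO'}" \<Phi>x]) (use cptp in \<open>auto simp: D_def\<close>)
  obtain nB :: nat and mB where
    decB: "\<forall>a\<in>basis D ({BI, BI'} \<union> {BO, BO'}). \<forall>b\<in>basis D ({BI, BI'} \<union> {BO, BO'}).
      choi {BI, BI'} {BO, BO'} \<Phi>y a b = (\<Sum>k<nB. mB k a * cnj (mB k b))"
    and tpB: "\<forall>x\<in>basis D {BI, BI'}. \<forall>y\<in>basis D {BI, BI'}.
      (\<Sum>q\<in>basis D {BO, BO'}. \<Sum>k<nB. mB k (join {BI, BI'} x q) * cnj (mB k (join {BI, BI'} y q))) = id_op x y"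
    by (rule cptp_kraus[of D "{BI, BI'}" "{BO, BO'}" \<Phi>y]) (use cptp in \<open>auto simp: D_def\<close>)
  define v where "v p = link_vec D u (mA (fst p)) (mB (snd p))" for p
  have "is_cptp_choi D {P, AI', BI'} {F, AO', BO'} (link_out D (proj u) (choi {AI, AI'} {AO, AO'} \<Phi>x) (choi {BI, BI'} {BO, BO'} \<Phi>y))"
  proof (rule cptp_choi_of_kraus[where K = "{..<nA} \<times> {..<nB}" and v = v])
    show "\<forall>a\<in>basis D ({P, AI', BI'} \<union> {F, AO', BO'}). \<forall>b\<in>basis D ({P, AI', BI'} \<union> {F, AO', BO'}).
      link_out D (proj u) (choi {AI, AI'} {AO, AO'} \<Phi>x) (choi {BI, BI'} {BO, BO'} \<Phi>y) a b =
      (\<Sum>p\<in>{..<nA} \<times> {..<nB}. v p a * cnj (v p b))"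
      using link_out_kraus[where K = "{..<nA}" and L = "{..<nB}"] decA decB
      unfolding basis_link_sys alice bob v_def by (simp add: sum.cartesian_product case_prod_beta)
    show "\<forall>x\<in>basis D {P, AI', BI'}. \<forall>y\<in>basis D {P, AI', BI'}.
      (\<Sum>s\<in>basis D {F, AO', BO'}. \<Sum>p\<in>{..<nA} \<times> {..<nB}. v p (join {P, AI', BI'} x s) * cnj (v p (join {P, AI', BI'} y s))) =
      id_op x y"
      using link_kraus_tp[OF dims _ _ _ _ _ pure tpA[unfolded D_def] tpB[unfolded D_def]] dpos pos
      unfolding v_def D_def by (simp add: sum.cartesian_product case_prod_beta mainS_def)
  qed auto
  then show "is_cptp_choi (anc_dims d a1 a2 b1 b2) {P, AI', BI'} {F, AO', BO'}
      (link_out (anc_dims d a1 a2 b1 b2) (proj u) (choi {AI, AI'} {AO, AO'} \<Phi>x) (choi {BI, BI'} {BO, BO'} \<Phi>y))"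
    unfolding D_def .
qed

theorem mainTheorem10:
  fixes d :: dims and w :: vec
  assumes "\<forall>l\<in>mainS. 1 \<le> d l"
    and "d AI = d AO" and "d BI = d BO" and "d P = d F"
    and "is_pure_process d (proj w)"
  shows "is_pure_process d (proj (w_rev w))"
proof -
  have pure: "is_pure d (proj (w_rev w))"
    using is_pure_w_rev[OF assms(1-4)] assms(5) by (simp add: is_pure_process_def)
  then have "is_process_matrix d (proj (w_rev w))" by (rule is_process_of_pure[OF assms(1-4)])
  with pure show ?thesis by (simp add: is_pure_process_def)
qed

end
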